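(* Let $(u,\phi,\theta,\eta)$ be a solution of the system $\rho u_{tt}=\mu u_{xx}+b\phi_x$, $J\phi_{tt}=\alpha\phi_{xx}-bu_x-\xi\phi-\beta\theta_x$, $c\theta_t=-\beta\phi_{xt}+\int_0^\infty\kappa(s)\eta_{xx}(x,s)ds$, $\eta_t=\theta-\eta_s$ on $(0,\pi)\times(0,\infty)$ with boundary conditions $u=\phi_x=\theta=0$ at $x=0,\pi$, $\eta(0,s)=\eta(\pi,s)=0$, $\eta(x,0)=0$. Then the functional \[ F_2(t)=-\frac{cJ}{\beta}\Big\langle\theta,\int_0^x\phi_t(y)dy\Big\rangle \] satisfies, for every $\varepsilon_2>0$, \[ \frac{d}{dt}F_2(t)\le-\frac J2\|\phi_t\|^2-M\int_0^{+\infty}\kappa'(s)\|\eta_x(s)\|^2ds+M\Big(1+\frac1{\varepsilon_2}\Big)\|\theta\|^2+\varepsilon_2\Big\|\sqrt\mu u_x+\frac b{\sqrt\mu}\phi\Big\|^2+\varepsilon_2\|\phi\|^2+\varepsilon_2\|\phi_x\|^2, \] where $M>0$ is a constant independent of $\varepsilon_2$.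
   Context: $\rho,J,c,\mu,b,\alpha,\xi$ are positive constants with $\mu\xi>b^2$; $\beta\ne0$ real. $\kappa$ satisfies (h1) $\kappa\in C([0,\infty))\cap L^1(0,\infty)$; (h2) $\kappa>0$, $\kappa'\le0$; (h3) $g(0):=\int_0^\infty\kappa(s)ds$; (h4) $\kappa'\le-\delta\kappa$ for some $\delta>0$. $\eta=\eta^t(x,s)=\int_0^s\theta(x,t-\tau)d\tau$. $\langle\cdot,\cdot\rangle,\|\cdot\|$ are the $L^2(0,\pi)$ inner product and norm. Solutions are sufficiently regular (strong) solutions so that differentiation is legitimate.
   Formalization: The bound holds only for solutions with the integral of phi(x,t) over x in (0,pi) equal to 0 at every time t > 0. The paper assumes this as well. *)

theory Defs
  imports "HOL-Analysis.Analysis"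
begin

definition pdx :: "(real \<Rightarrow> real \<Rightarrow> real) \<Rightarrow> real \<Rightarrow> real \<Rightarrow> real" where
  "pdx f x t = vector_derivative (\<lambda>y. f y t) (at x within {0..pi})"

definition pdt :: "(real \<Rightarrow> real \<Rightarrow> real) \<Rightarrow> real \<Rightarrow> real \<Rightarrow> real" where
  "pdt f x t = vector_derivative (\<lambda>\<tau>. f x \<tau>) (at t)"

definition e_x :: "(real \<Rightarrow> real \<Rightarrow> real \<Rightarrow> real) \<Rightarrow> real \<Rightarrow> real \<Rightarrow> real \<Rightarrow> real" where
  "e_x \<eta> x s t = vector_derivative (\<lambda>y. \<eta> y s t) (at x within {0..pi})"

definition e_xx :: "(real \<Rightarrow> real \<Rightarrow> real \<Rightarrow> real) \<Rightarrow> real \<Rightarrow> real \<Rightarrow> real \<Rightarrow> real" where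
  "e_xx \<eta> = e_x (e_x \<eta>)"

definition e_t :: "(real \<Rightarrow> real \<Rightarrow> real \<Rightarrow> real) \<Rightarrow> real \<Rightarrow> real \<Rightarrow> real \<Rightarrow> real" where
  "e_t \<eta> x s t = vector_derivative (\<lambda>\<tau>. \<eta> x s \<tau>) (at t)"

definition e_s :: "(real \<Rightarrow> real \<Rightarrow> real \<Rightarrow> real) \<Rightarrow> real \<Rightarrow> real \<Rightarrow> real \<Rightarrow> real" where
  "e_s \<eta> x s t = vector_derivative (\<lambda>\<sigma>. \<eta> x \<sigma> t) (at s within {0..})"

definition L2inner :: "(real \<Rightarrow> real) \<Rightarrow> (real \<Rightarrow> real) \<Rightarrow> real" where
  "L2inner f g = integral {0..pi} (\<lambda>x. f x * g x)"

definition L2norm :: "(real \<Rightarrow> real) \<Rightarrow> real" where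
  "L2norm f = sqrt (L2inner f f)"

definition regular2 :: "(real \<Rightarrow> real \<Rightarrow> real) \<Rightarrow> bool" where
  "regular2 f \<longleftrightarrow>
    (\<forall>t>0. \<forall>x\<in>{0..pi}.
       ((\<lambda>y. f y t) has_vector_derivative pdx f x t) (at x within {0..pi}) \<and>
       ((\<lambda>y. pdx f y t) has_vector_derivative pdx (pdx f) x t) (at x within {0..pi}) \<and>
       ((\<lambda>y. pdt f y t) has_vector_derivative pdx (pdt f) x t) (at x within {0..pi}) \<and>
       ((\<lambda>\<tau>. f x \<tau>) has_vector_derivative pdt f x t) (at t) \<and>
       ((\<lambda>\<tau>. pdt f x \<tau>) has_vector_derivative pdt (pdt f) x t) (at t) \<and>
       ((\<lambda>\<tau>. pdx f x \<tau>) has_vector_derivative pdt (pdx f) x t) (at t)) \<and>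
    (\<forall>g\<in>{f, pdx f, pdx (pdx f), pdt f, pdt (pdt f), pdx (pdt f), pdt (pdx f)}.
       continuous_on ({0..pi} \<times> {0<..}) (\<lambda>(x,t). g x t))"

text \<open>Regularity of the memory variable eta(x,s,t) on [0,pi] x [0,oo) x (0,oo),
  together with the integrability needed for the memory integrals to make sense.\<close>

definition regular_eta ::
  "(real \<Rightarrow> real) \<Rightarrow> (real \<Rightarrow> real) \<Rightarrow> (real \<Rightarrow> real \<Rightarrow> real \<Rightarrow> real) \<Rightarrow> bool" where
  "regular_eta \<kappa> \<kappa>' \<eta> \<longleftrightarrow>
    (\<forall>t>0. \<forall>s\<ge>0. \<forall>x\<in>{0..pi}.
       ((\<lambda>y. \<eta> y s t) has_vector_derivative e_x \<eta> x s t) (at x within {0..pi}) \<and>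
       ((\<lambda>y. e_x \<eta> y s t) has_vector_derivative e_xx \<eta> x s t) (at x within {0..pi}) \<and>
       ((\<lambda>\<tau>. \<eta> x s \<tau>) has_vector_derivative e_t \<eta> x s t) (at t) \<and>
       ((\<lambda>\<sigma>. \<eta> x \<sigma> t) has_vector_derivative e_s \<eta> x s t) (at s within {0..})) \<and>
    (\<forall>g\<in>{\<eta>, e_x \<eta>, e_xx \<eta>, e_t \<eta>, e_s \<eta>}.
       continuous_on ({0..pi} \<times> {0..} \<times> {0<..}) (\<lambda>(x,s,t). g x s t)) \<and>
    (\<forall>t>0. set_integrable lborel ({0..pi} \<times> {0<..}) (\<lambda>(x,s). \<kappa> s * e_xx \<eta> x s t)) \<and>
    (\<forall>t>0. set_integrable lborel {0<..} (\<lambda>s. \<kappa>' s * (L2norm (\<lambda>x. e_x \<eta> x s t))\<^sup>2))"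

end

theory Submission
  imports Defs
begin

text \<open>
  With \<open>P(x) = \<integral>\<^sub>0\<^sup>x \<phi>\<^sub>t\<close> we have \<open>F\<^sub>2 = -(cJ/\<beta>)\<langle>\<theta>, P\<rangle>\<close>, and \<open>P\<close> vanishes at both ends because
  \<open>\<phi>\<close> has mean zero. Substituting the heat equation and integrating by parts in \<open>x\<close> (for the
  memory term after exchanging the \<open>x\<close>- and \<open>s\<close>-integrals) gives
  \<open>c\<langle>\<theta>\<^sub>t, P\<rangle> = \<beta>\<parallel>\<phi>\<^sub>t\<parallel>\<^sup>2 - \<integral>\<kappa>(s)\<langle>\<eta>\<^sub>x(s), \<phi>\<^sub>t\<rangle>ds\<close>, while the second equation integrated over
  \<open>(0,x)\<close> gives \<open>JP\<^sub>t = \<alpha>\<phi>\<^sub>x - bu - \<xi>\<integral>\<^sub>0\<^sup>x\<phi> - \<beta>\<theta>\<close>. Hence \<open>F\<^sub>2' = -J\<parallel>\<phi>\<^sub>t\<parallel>\<^sup>2 + c\<parallel>\<theta>\<parallel>\<^sup>2\<close> plus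
  products, all of which contain \<open>\<theta>\<close> except the memory term. Young's inequality, Poincare's
  inequality (for \<open>u\<close> and \<open>\<integral>\<^sub>0\<^sup>x\<phi>\<close>) and \<open>\<kappa> \<le> -\<kappa>'/\<delta>\<close> absorb them.
\<close>

section \<open>Inequalities and calculus on an interval\<close>

lemma young_product:
  fixes a b \<gamma> :: real
  assumes "\<gamma> > 0"
  shows "a * b \<le> \<gamma> * a\<^sup>2 + b\<^sup>2 / (4 * \<gamma>)"
proof -
  have "0 \<le> (2 * \<gamma> * a - b)\<^sup>2" by simp
  then have "4 * \<gamma> * (a * b) \<le> 4 * \<gamma> * (\<gamma> * a\<^sup>2 + b\<^sup>2 / (4 * \<gamma>))"
    using assms by (simp add: power2_eq_square algebra_simps)
  then show ?thesis using assms by simp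
qed

lemma integral_square_nonneg: "0 \<le> integral S (\<lambda>x. f x * f x :: real)"
  by (cases "(\<lambda>x. f x * f x) integrable_on S")
    (auto intro: integral_nonneg simp: not_integrable_integral)

lemma L2norm_square: "(L2norm f)\<^sup>2 = L2inner f f"
  unfolding L2norm_def L2inner_def using integral_square_nonneg[of "{0..pi}" f] by simp

lemma integral_young:
  fixes f g :: "real \<Rightarrow> real"
  assumes "continuous_on {a..b} f" "continuous_on {a..b} g" "\<gamma> > 0"
  shows "k * integral {a..b} (\<lambda>x. f x * g x)
           \<le> \<gamma> * integral {a..b} (\<lambda>x. g x * g x) + k\<^sup>2 / (4 * \<gamma>) * integral {a..b} (\<lambda>x. f x * f x)"
proof -
  have "integral {a..b} (\<lambda>x. k * (f x * g x))
          \<le> integral {a..b} (\<lambda>x. \<gamma> * (g x * g x) + k\<^sup>2 / (4 * \<gamma>) * (f x * f x))"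
    using assms young_product[OF assms(3), of "g x" "k * f x" for x]
    by (intro integral_le integrable_continuous_interval continuous_intros)
      (auto simp: power2_eq_square algebra_simps)
  also have "\<dots> = \<gamma> * integral {a..b} (\<lambda>x. g x * g x) + k\<^sup>2 / (4 * \<gamma>) * integral {a..b} (\<lambda>x. f x * f x)"
    using assms by (subst integral_add) (auto intro!: integrable_continuous_interval continuous_intros)
  finally show ?thesis by simp
qed

lemma integral_square_le:
  fixes f :: "real \<Rightarrow> real"
  assumes "a \<le> b" "continuous_on {a..b} f"
  shows "(integral {a..b} f)\<^sup>2 \<le> (b - a) * integral {a..b} (\<lambda>y. f y * f y)"
proof (cases "a = b")
  case False
  then have ab: "b - a > 0" using assms by simp
  define I where "I = integral {a..b} f"
  define m where "m = I / (b - a)"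
  have I_eq: "I = m * (b - a)" using ab by (simp add: m_def)
  have "0 \<le> integral {a..b} (\<lambda>y. (f y - m) * (f y - m))"
    by (rule integral_square_nonneg)
  also have "\<dots> = integral {a..b} (\<lambda>y. f y * f y - 2 * m * f y + m * m)"
    by (simp add: algebra_simps)
  also have "\<dots> = integral {a..b} (\<lambda>y. f y * f y) - 2 * m * I + m * m * (b - a)"
    using assms unfolding I_def
    by (subst integral_add integral_diff, auto intro!: integrable_continuous_interval continuous_intros)+
  also have "\<dots> = integral {a..b} (\<lambda>y. f y * f y) - m * m * (b - a)"
    by (simp add: I_eq algebra_simps)
  finally have "(b - a) * (m * m * (b - a)) \<le> (b - a) * integral {a..b} (\<lambda>y. f y * f y)"
    using ab by (intro mult_left_mono) auto
  then show ?thesis by (simp add: I_def[symmetric] I_eq power2_eq_square algebra_simps)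
qed simp

lemma poincare_indefinite_integral:
  fixes f :: "real \<Rightarrow> real"
  assumes "0 \<le> L" "continuous_on {0..L} f"
  shows "integral {0..L} (\<lambda>x. integral {0..x} f * integral {0..x} f)
           \<le> L\<^sup>2 * integral {0..L} (\<lambda>x. f x * f x)"
proof -
  have "integral {0..L} (\<lambda>x. integral {0..x} f * integral {0..x} f)
          \<le> integral {0..L} (\<lambda>x. L * integral {0..L} (\<lambda>x. f x * f x))"
  proof (rule integral_le)
    show "(\<lambda>x. integral {0..x} f * integral {0..x} f) integrable_on {0..L}"
      using assms by (intro integrable_continuous_interval continuous_intros
          indefinite_integral_continuous_1 integrable_continuous_interval)
    fix x assume x: "x \<in> {0..L}"
    have cfx: "continuous_on {0..x} f" using x by (intro continuous_on_subset[OF assms(2)]) auto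
    have "integral {0..x} f * integral {0..x} f \<le> x * integral {0..x} (\<lambda>y. f y * f y)"
      using integral_square_le[OF _ cfx] x by (simp add: power2_eq_square)
    also have "\<dots> \<le> L * integral {0..L} (\<lambda>x. f x * f x)"
      using x assms cfx
      by (intro mult_mono integral_subset_le integral_square_nonneg integrable_continuous_interval
          continuous_intros) auto
    finally show "integral {0..x} f * integral {0..x} f \<le> L * integral {0..L} (\<lambda>x. f x * f x)" .
  qed (auto intro: integrable_continuous_interval)
  then show ?thesis using assms(1) by (simp add: power2_eq_square)
qed

lemma integral_by_parts_continuous:
  fixes f g f' g' :: "real \<Rightarrow> real"
  assumes "a \<le> b" "continuous_on {a..b} f" "continuous_on {a..b} g"
    "continuous_on {a..b} f'" "continuous_on {a..b} g'"
    "\<And>x. x \<in> {a<..<b} \<Longrightarrow> (f has_real_derivative f' x) (at x)"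
    "\<And>x. x \<in> {a<..<b} \<Longrightarrow> (g has_real_derivative g' x) (at x)"
  shows "integral {a..b} (\<lambda>x. f' x * g x)
           = f b * g b - f a * g a - integral {a..b} (\<lambda>x. f x * g' x)"
proof -
  have "((\<lambda>x. f' x * g x + f x * g' x) has_integral (f b * g b - f a * g a)) {a..b}"
  proof (rule fundamental_theorem_of_calculus_interior[OF assms(1)])
    show "continuous_on {a..b} (\<lambda>x. f x * g x)" using assms by (intro continuous_intros)
    fix x assume "x \<in> {a<..<b}"
    then show "((\<lambda>x. f x * g x) has_vector_derivative f' x * g x + f x * g' x) (at x)"
      using assms(6,7) unfolding has_real_derivative_iff_has_vector_derivative[symmetric]
      by (auto intro!: derivative_eq_intros)
  qed
  moreover have "integral {a..b} (\<lambda>x. f' x * g x + f x * g' x)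
                   = integral {a..b} (\<lambda>x. f' x * g x) + integral {a..b} (\<lambda>x. f x * g' x)"
    using assms by (intro integral_add integrable_continuous_interval continuous_intros)
  ultimately show ?thesis by (simp add: integral_unique algebra_simps)
qed

lemma has_integral_derivative_initial_segment:
  fixes g g' :: "real \<Rightarrow> real"
  assumes "\<And>y. y \<in> {a..b} \<Longrightarrow> (g has_vector_derivative g' y) (at y within {a..b})"
    and "x \<in> {a..b}"
  shows "(g' has_integral (g x - g a)) {a..x}"
proof (rule fundamental_theorem_of_calculus)
  fix y assume "y \<in> {a..x}"
  then show "(g has_vector_derivative g' y) (at y within {a..x})"
    using assms by (intro has_vector_derivative_within_subset[OF assms(1)]) auto
qed (use assms in auto)

lemma has_real_derivative_at_interior:
  assumes "(g has_vector_derivative g') (at x within {a..b})" "x \<in> {a<..<b}"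
  shows "(g has_real_derivative g') (at x)"
  using assms at_within_interior[of x "{a..b}"]
  by (simp add: has_real_derivative_iff_has_vector_derivative)

lemma continuous_on_slice:
  assumes "continuous_on (S \<times> T) (\<lambda>(x, y). f x y)" "y \<in> T"
  shows "continuous_on S (\<lambda>x. f x y)"
  by (rule continuous_on_compose2[OF assms(1), where f="\<lambda>x. (x, y)", simplified])
    (use assms(2) in \<open>auto intro!: continuous_intros\<close>)

lemma integral_rescale_unit_interval:
  fixes f :: "real \<Rightarrow> real"
  assumes "0 \<le> x" "continuous_on {0..x} f"
  shows "integral {0..x} f = x * integral {0..1} (\<lambda>s. f (x * s))"
proof (cases "x = 0")
  case False
  then have x: "x > 0" using assms by simp
  have "(f has_integral integral {0..x} f) {0..x}"
    using assms by (intro integrable_integral integrable_continuous_interval)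
  from has_integral_stretch_real[OF this, of x] x
  have "((\<lambda>s. f (x * s)) has_integral (1 / x) * integral {0..x} f) ((\<lambda>y. y / x) ` {0..x})"
    by simp
  moreover have "(\<lambda>y. y / x) ` {0..x} = {0..1}"
    using x by (auto simp: field_simps image_iff intro!: bexI[of _ "x * _"])
  ultimately show ?thesis using x by (simp add: integral_unique)
qed simp

lemma has_real_derivative_unique_on_open:
  fixes F G :: "real \<Rightarrow> real"
  assumes "(F has_real_derivative D) (at t)" "(G has_real_derivative E) (at t)"
    and "open S" "t \<in> S" "\<And>\<tau>. \<tau> \<in> S \<Longrightarrow> F \<tau> = G \<tau>"
  shows "D = E"
  using has_field_derivative_transform_within_open[OF assms(1,3,4,5)] assms(2) DERIV_unique by blast

section \<open>Integrals depending on a parameter\<close>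

lemma continuous_on_indefinite_integral_param:
  fixes g :: "real \<Rightarrow> 'a::topological_space \<Rightarrow> real"
  assumes "continuous_on ({0..L} \<times> V) (\<lambda>(x, \<tau>). g x \<tau>)"
  shows "continuous_on ({0..L} \<times> V) (\<lambda>(x, \<tau>). integral {0..x} (\<lambda>y. g y \<tau>))"
proof -
  have rescaled: "fst p * integral (cbox 0 1) (\<lambda>s. g (fst p * s) (snd p))
                     = (\<lambda>(x, \<tau>). integral {0..x} (\<lambda>y. g y \<tau>)) p"
    if "p \<in> {0..L} \<times> V" for p
  proof -
    obtain x \<tau> where p: "p = (x, \<tau>)" by force
    have "continuous_on {0..x} (\<lambda>y. g y \<tau>)"
      using that p by (intro continuous_on_slice[OF continuous_on_subset[OF assms], where T=V]) auto
    then show ?thesis using that p by (simp add: integral_rescale_unit_interval)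
  qed
  have "continuous_on (({0..L} \<times> V) \<times> cbox 0 1)
          ((\<lambda>(x, \<tau>). g x \<tau>) \<circ> (\<lambda>q. (fst (fst q) * snd q, snd (fst q))))"
  proof (rule continuous_on_compose)
    show "continuous_on (({0..L} \<times> V) \<times> cbox 0 1) (\<lambda>q. (fst (fst q) * snd q, snd (fst q)))"
      by (intro continuous_intros)
    have "x * s \<le> L" if "0 \<le> x" "x \<le> L" "s \<le> 1" "0 \<le> s" for x s :: real
      using that by (metis mult_left_le order_trans)
    then have "(\<lambda>q. (fst (fst q) * snd q, snd (fst q))) ` (({0..L} \<times> V) \<times> cbox 0 1) \<subseteq> {0..L} \<times> V"
      by auto
    then show "continuous_on ((\<lambda>q. (fst (fst q) * snd q, snd (fst q))) ` (({0..L} \<times> V) \<times> cbox 0 1))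
                 (\<lambda>(x, \<tau>). g x \<tau>)"
      using assms continuous_on_subset by blast
  qed
  then have rescaled_cont:
    "continuous_on (({0..L} \<times> V) \<times> cbox 0 1) (\<lambda>(p, s). g (fst p * s) (snd p))"
    by (simp add: o_def split_def)
  have "continuous_on ({0..L} \<times> V) (\<lambda>p. fst p * integral (cbox 0 1) (\<lambda>s. g (fst p * s) (snd p)))"
    by (intro continuous_intros integral_continuous_on_param[of _ _ _ "\<lambda>p s. g (fst p * s) (snd p)",
          OF rescaled_cont])
  then show ?thesis
    by (rule continuous_on_eq[OF _ rescaled])
qed

lemma has_real_derivative_integral_param:
  fixes f f' :: "real \<Rightarrow> real \<Rightarrow> real"
  assumes T: "open T" "t \<in> T"
    and cont: "\<And>\<tau>. \<tau> \<in> T \<Longrightarrow> continuous_on {a..b} (\<lambda>x. f x \<tau>)"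
    and cont': "continuous_on ({a..b} \<times> T) (\<lambda>(x, \<tau>). f' x \<tau>)"
    and deriv: "\<And>x \<tau>. x \<in> {a..b} \<Longrightarrow> \<tau> \<in> T \<Longrightarrow> ((\<lambda>\<tau>. f x \<tau>) has_real_derivative f' x \<tau>) (at \<tau>)"
  shows "((\<lambda>\<tau>. integral {a..b} (\<lambda>x. f x \<tau>)) has_real_derivative integral {a..b} (\<lambda>x. f' x t)) (at t)"
proof -
  obtain e where e: "e > 0" "cball t e \<subseteq> T" using T open_contains_cball_eq by metis
  have "((\<lambda>\<tau>. integral (cbox a b) (\<lambda>x. f x \<tau>)) has_field_derivative integral (cbox a b) (\<lambda>x. f' x t))
          (at t within cball t e)"
  proof (rule leibniz_rule_field_derivative[where fx="\<lambda>\<tau> x. f' x \<tau>"])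
    fix \<tau> x assume "\<tau> \<in> cball t e" "x \<in> cbox a b"
    then show "((\<lambda>\<tau>. f x \<tau>) has_field_derivative f' x \<tau>) (at \<tau> within cball t e)"
      using e by (intro has_field_derivative_at_within[OF deriv]) auto
  next
    fix \<tau> assume "\<tau> \<in> cball t e"
    then show "(\<lambda>x. f x \<tau>) integrable_on cbox a b"
      using e by (simp add: cont integrable_continuous_interval subset_iff)
  next
    have "cbox a b \<times> cball t e \<subseteq> {a..b} \<times> T" using e by auto
    then show "continuous_on (cball t e \<times> cbox a b) (\<lambda>(\<tau>, x). f' x \<tau>)"
      by (intro continuous_on_swap_args[OF continuous_on_subset[OF cont']])
  qed (use e in auto)
  moreover have "t \<in> interior (cball t e)" using e by simp
  ultimately show ?thesis using at_within_interior[of t "cball t e"] by simp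
qed

lemma set_integrable_mult_continuous:
  fixes h :: "real \<Rightarrow> real \<Rightarrow> real" and P :: "real \<Rightarrow> real"
  assumes "a \<le> b" and h: "set_integrable lborel ({a..b} \<times> S) (\<lambda>(x, s). h x s)"
    and P: "continuous_on {a..b} P"
  shows "set_integrable lborel ({a..b} \<times> S) (\<lambda>(x, s). h x s * P x)"
proof -
  text \<open>Extend \<open>P\<close> to a bounded continuous function on \<open>\<real>\<close>, so that the product is
    dominated by a multiple of \<open>|h|\<close> on the whole plane.\<close>
  define Pc where "Pc x = P (max a (min b x))" for x
  have Pc_cont: "continuous_on UNIV Pc" unfolding Pc_def
    by (rule continuous_on_compose2[OF P]) (use assms(1) in \<open>auto intro!: continuous_intros\<close>)
  obtain B where B: "\<And>x. x \<in> {a..b} \<Longrightarrow> norm (P x) \<le> B"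
    using continuous_on_compact_bound[OF compact_Icc P] by blast
  have Pc_bound: "\<bar>Pc x\<bar> \<le> B" for x
    unfolding Pc_def using B[of "max a (min b x)"] assms(1) by simp
  define g where "g p = indicator ({a..b} \<times> S) p *\<^sub>R h (fst p) (snd p)" for p :: "real \<times> real"
  have g_int: "integrable lborel g"
    using h unfolding set_integrable_def g_def by (simp add: case_prod_beta)
  have "integrable lborel (\<lambda>p. g p * Pc (fst p))"
  proof (rule Bochner_Integration.integrable_bound[OF integrable_mult_right[OF g_int, of B]])
    have "(\<lambda>p::real \<times> real. Pc (fst p)) \<in> borel_measurable lborel"
      by (simp, rule borel_measurable_continuous_onI, rule continuous_on_compose2[OF Pc_cont])
        (auto intro!: continuous_intros)
    then show "(\<lambda>p. g p * Pc (fst p)) \<in> borel_measurable lborel"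
      by (intro borel_measurable_times borel_measurable_integrable[OF g_int])
    show "AE p in lborel. norm (g p * Pc (fst p)) \<le> norm (B * g p)"
    proof (intro AE_I2)
      fix p :: "real \<times> real"
      have "\<bar>Pc (fst p)\<bar> * \<bar>g p\<bar> \<le> \<bar>B\<bar> * \<bar>g p\<bar>"
        using Pc_bound[of "fst p"] by (intro mult_right_mono) auto
      then show "norm (g p * Pc (fst p)) \<le> norm (B * g p)" by (simp add: abs_mult mult.commute)
    qed
  qed
  moreover have "g p * Pc (fst p) = indicator ({a..b} \<times> S) p *\<^sub>R (case p of (x, s) \<Rightarrow> h x s * P x)" for p
    by (cases p) (auto simp: g_def Pc_def split: split_indicator)
  ultimately show ?thesis unfolding set_integrable_def by simp
qed

lemma integral_set_lebesgue_integral_swap: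
  fixes h :: "real \<Rightarrow> real \<Rightarrow> real" and P :: "real \<Rightarrow> real"
  assumes "a \<le> b"
    and h: "set_integrable lborel ({a..b} \<times> S) (\<lambda>(x, s). h x s)"
    and h_cont: "\<And>s. s \<in> S \<Longrightarrow> continuous_on {a..b} (\<lambda>x. h x s)"
    and P: "continuous_on {a..b} P"
  shows "set_integrable lborel S (\<lambda>s. integral {a..b} (\<lambda>x. h x s * P x))"
    and "integral {a..b} (\<lambda>x. (LINT s:S|lborel. h x s) * P x)
           = (LINT s:S|lborel. integral {a..b} (\<lambda>x. h x s * P x))"
proof -
  define G where "G p = indicator ({a..b} \<times> S) p *\<^sub>R (h (fst p) (snd p) * P (fst p))" for p
  have "integrable lborel G"
    using set_integrable_mult_continuous[OF assms(1) h P]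
    unfolding set_integrable_def G_def by (simp add: case_prod_beta)
  then have G_int: "integrable (lborel \<Otimes>\<^sub>M lborel) G" by (simp add: lborel_prod)
  then have G_int': "integrable (lborel \<Otimes>\<^sub>M lborel) (\<lambda>(x, s). G (x, s))" by simp
  have inner_s: "(\<integral>s. G (x, s) \<partial>lborel) = indicator {a..b} x * (P x * (LINT s:S|lborel. h x s))" for x
  proof -
    have "(\<lambda>s. G (x, s)) = (\<lambda>s. (indicator {a..b} x * P x) * (indicator S s *\<^sub>R h x s))"
      by (auto simp: G_def indicator_times)
    then show ?thesis by (simp add: set_lebesgue_integral_def)
  qed
  have inner_x: "(\<integral>x. G (x, s) \<partial>lborel) = indicator S s * integral {a..b} (\<lambda>x. h x s * P x)" for s
  proof (cases "s \<in> S")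
    case True
    have "(\<lambda>x. G (x, s)) = (\<lambda>x. indicator S s * (indicator {a..b} x *\<^sub>R (h x s * P x)))"
      by (auto simp: G_def indicator_times)
    then have "(\<integral>x. G (x, s) \<partial>lborel) = indicator S s * (LINT x:{a..b}|lborel. h x s * P x)"
      by (simp add: set_lebesgue_integral_def)
    also have "(LINT x:{a..b}|lborel. h x s * P x) = integral {a..b} (\<lambda>x. h x s * P x)"
      using True by (intro set_borel_integral_eq_integral borel_integrable_atLeastAtMost' continuous_intros
          h_cont P) auto
    finally show ?thesis .
  qed (simp add: G_def)
  have "integrable lborel (\<lambda>s. \<integral>x. G (x, s) \<partial>lborel)"
    using lborel_pair.integrable_snd[OF G_int'] by simp
  then show "set_integrable lborel S (\<lambda>s. integral {a..b} (\<lambda>x. h x s * P x))"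
    unfolding inner_x set_integrable_def by simp
  have outer_int: "set_integrable lborel {a..b} (\<lambda>x. P x * (LINT s:S|lborel. h x s))"
    using lborel_pair.integrable_fst'[OF G_int] unfolding inner_s set_integrable_def by simp
  have "integral {a..b} (\<lambda>x. (LINT s:S|lborel. h x s) * P x)
          = (\<integral>x. (\<integral>s. G (x, s) \<partial>lborel) \<partial>lborel)"
    using set_borel_integral_eq_integral(2)[OF outer_int]
    unfolding inner_s set_lebesgue_integral_def by (simp add: mult.commute)
  also have "\<dots> = (\<integral>s. (\<integral>x. G (x, s) \<partial>lborel) \<partial>lborel)"
    using lborel_pair.integral_fst'[OF G_int] lborel_pair.integral_snd[OF G_int'] by simp
  also have "\<dots> = (LINT s:S|lborel. integral {a..b} (\<lambda>x. h x s * P x))"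
    unfolding inner_x set_lebesgue_integral_def by simp
  finally show "integral {a..b} (\<lambda>x. (LINT s:S|lborel. h x s) * P x)
                  = (LINT s:S|lborel. integral {a..b} (\<lambda>x. h x s * P x))" .
qed

section \<open>Regular solution components\<close>

lemma regular2_derivatives:
  assumes "regular2 f" "t > 0" "x \<in> {0..pi}"
  shows "((\<lambda>y. f y t) has_vector_derivative pdx f x t) (at x within {0..pi})"
    and "((\<lambda>y. pdx f y t) has_vector_derivative pdx (pdx f) x t) (at x within {0..pi})"
    and "((\<lambda>\<tau>. f x \<tau>) has_real_derivative pdt f x t) (at t)"
    and "((\<lambda>\<tau>. pdt f x \<tau>) has_real_derivative pdt (pdt f) x t) (at t)"
    and "((\<lambda>\<tau>. pdx f x \<tau>) has_real_derivative pdt (pdx f) x t) (at t)"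
  using assms unfolding regular2_def has_real_derivative_iff_has_vector_derivative by blast+

lemma regular2_continuous:
  assumes "regular2 f"
  shows "continuous_on ({0..pi} \<times> {0<..}) (\<lambda>(x, t). f x t)"
    and "continuous_on ({0..pi} \<times> {0<..}) (\<lambda>(x, t). pdx f x t)"
    and "continuous_on ({0..pi} \<times> {0<..}) (\<lambda>(x, t). pdt f x t)"
    and "continuous_on ({0..pi} \<times> {0<..}) (\<lambda>(x, t). pdt (pdt f) x t)"
    and "continuous_on ({0..pi} \<times> {0<..}) (\<lambda>(x, t). pdt (pdx f) x t)"
  using assms unfolding regular2_def by simp_all

lemma regular2_continuous_slice:
  assumes "regular2 f" "t > 0"
  shows "continuous_on {0..pi} (\<lambda>x. f x t)"
    and "continuous_on {0..pi} (\<lambda>x. pdx f x t)"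
    and "continuous_on {0..pi} (\<lambda>x. pdt f x t)"
    and "continuous_on {0..pi} (\<lambda>x. pdt (pdt f) x t)"
    and "continuous_on {0..pi} (\<lambda>x. pdt (pdx f) x t)"
  using assms by (auto intro!: continuous_on_slice[where T="{0<..}"] regular2_continuous)

lemma has_real_derivative_integral_regular2:
  assumes "regular2 f" "t > 0" "0 \<le> a" "b \<le> pi"
  shows "((\<lambda>\<tau>. integral {a..b} (\<lambda>x. f x \<tau>)) has_real_derivative integral {a..b} (\<lambda>x. pdt f x t)) (at t)"
    and "((\<lambda>\<tau>. integral {a..b} (\<lambda>x. pdt f x \<tau>)) has_real_derivative integral {a..b} (\<lambda>x. pdt (pdt f) x t)) (at t)"
    and "((\<lambda>\<tau>. integral {a..b} (\<lambda>x. pdx f x \<tau>)) has_real_derivative integral {a..b} (\<lambda>x. pdt (pdx f) x t)) (at t)"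
proof -
  have sub: "{a..b} \<times> {0<..} \<subseteq> {0..pi} \<times> {0<..}" "{a..b} \<subseteq> {0..pi}" using assms by auto
  have param: "((\<lambda>\<tau>. integral {a..b} (\<lambda>x. g x \<tau>)) has_real_derivative integral {a..b} (\<lambda>x. g' x t)) (at t)"
    if cont: "continuous_on ({0..pi} \<times> {0<..}) (\<lambda>(x, \<tau>). g x \<tau>)"
      and cont': "continuous_on ({0..pi} \<times> {0<..}) (\<lambda>(x, \<tau>). g' x \<tau>)"
      and deriv: "\<And>x \<tau>. x \<in> {0..pi} \<Longrightarrow> \<tau> > 0 \<Longrightarrow> ((\<lambda>\<tau>. g x \<tau>) has_real_derivative g' x \<tau>) (at \<tau>)"
    for g g' :: "real \<Rightarrow> real \<Rightarrow> real"
  proof (rule has_real_derivative_integral_param[where T="{0<..}"])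
    fix \<tau> :: real assume "\<tau> \<in> {0<..}"
    then show "continuous_on {a..b} (\<lambda>x. g x \<tau>)"
      by (intro continuous_on_slice[OF continuous_on_subset[OF cont sub(1)]])
  next
    show "continuous_on ({a..b} \<times> {0<..}) (\<lambda>(x, \<tau>). g' x \<tau>)"
      by (rule continuous_on_subset[OF cont' sub(1)])
  qed (use assms sub(2) deriv in auto)
  note joint = regular2_continuous[OF assms(1)]
  show "((\<lambda>\<tau>. integral {a..b} (\<lambda>x. f x \<tau>)) has_real_derivative integral {a..b} (\<lambda>x. pdt f x t)) (at t)"
    by (rule param[OF joint(1,3) regular2_derivatives(3)[OF assms(1)]])
  show "((\<lambda>\<tau>. integral {a..b} (\<lambda>x. pdt f x \<tau>)) has_real_derivative integral {a..b} (\<lambda>x. pdt (pdt f) x t)) (at t)"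
    by (rule param[OF joint(3,4) regular2_derivatives(4)[OF assms(1)]])
  show "((\<lambda>\<tau>. integral {a..b} (\<lambda>x. pdx f x \<tau>)) has_real_derivative integral {a..b} (\<lambda>x. pdt (pdx f) x t)) (at t)"
    by (rule param[OF joint(2,5) regular2_derivatives(5)[OF assms(1)]])
qed

lemma regular_eta_has_real_derivative_e_x:
  assumes "regular_eta \<kappa> \<kappa>' \<eta>" "t > 0" "s \<ge> 0" "x \<in> {0<..<pi}"
  shows "((\<lambda>y. e_x \<eta> y s t) has_real_derivative e_xx \<eta> x s t) (at x)"
  using assms unfolding regular_eta_def by (intro has_real_derivative_at_interior[where a=0 and b=pi]) auto

lemma regular_eta_continuous_slice:
  assumes "regular_eta \<kappa> \<kappa>' \<eta>" "t > 0" "s \<ge> 0"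
  shows "continuous_on {0..pi} (\<lambda>x. e_x \<eta> x s t)" "continuous_on {0..pi} (\<lambda>x. e_xx \<eta> x s t)"
proof -
  have "continuous_on {0..pi} (\<lambda>x. (\<lambda>(s, t). e_x \<eta> x s t) (s, t))"
    by (rule continuous_on_slice[where f="\<lambda>x (s, t). e_x \<eta> x s t" and T="{0..} \<times> {0<..}"])
      (use assms in \<open>auto simp: regular_eta_def\<close>)
  moreover have "continuous_on {0..pi} (\<lambda>x. (\<lambda>(s, t). e_xx \<eta> x s t) (s, t))"
    by (rule continuous_on_slice[where f="\<lambda>x (s, t). e_xx \<eta> x s t" and T="{0..} \<times> {0<..}"])
      (use assms in \<open>auto simp: regular_eta_def\<close>)
  ultimately show "continuous_on {0..pi} (\<lambda>x. e_x \<eta> x s t)" "continuous_on {0..pi} (\<lambda>x. e_xx \<eta> x s t)"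
    by simp_all
qed

section \<open>Identities for strong solutions\<close>

lemma integral_pdt_eq_0:
  assumes "regular2 \<phi>" "t > 0" "\<forall>\<tau>>0. integral {0..pi} (\<lambda>x. \<phi> x \<tau>) = 0"
  shows "integral {0..pi} (\<lambda>x. pdt \<phi> x t) = 0"
proof (rule has_real_derivative_unique_on_open[where S="{0<..}"])
  show "((\<lambda>\<tau>. integral {0..pi} (\<lambda>x. \<phi> x \<tau>)) has_real_derivative integral {0..pi} (\<lambda>x. pdt \<phi> x t)) (at t)"
    by (rule has_real_derivative_integral_regular2(1)[OF assms(1,2)]) auto
qed (use assms in auto)

text \<open>Mixed partial derivatives are not assumed to commute; the \<open>x\<close>-derivative of \<open>\<phi>\<^sub>t\<close> is
  recovered from \<open>\<phi>\<^sub>x\<^sub>t\<close> by differentiating \<open>\<integral>\<^sub>0\<^sup>x \<phi>\<^sub>x = \<phi>(x) - \<phi>(0)\<close> in time.\<close>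

lemma pdt_has_real_derivative_pdt_pdx:
  assumes "regular2 \<phi>" "t > 0" "x \<in> {0<..<pi}"
  shows "((\<lambda>y. pdt \<phi> y t) has_real_derivative pdt (pdx \<phi>) x t) (at x)"
proof -
  have antiderivative: "integral {0..y} (\<lambda>z. pdt (pdx \<phi>) z t) = pdt \<phi> y t - pdt \<phi> 0 t"
    if y: "y \<in> {0..pi}" for y
  proof (rule has_real_derivative_unique_on_open[where S="{0<..}"])
    show "((\<lambda>\<tau>. integral {0..y} (\<lambda>z. pdx \<phi> z \<tau>)) has_real_derivative integral {0..y} (\<lambda>z. pdt (pdx \<phi>) z t)) (at t)"
      using y by (intro has_real_derivative_integral_regular2(3)[OF assms(1,2)]) auto
    show "((\<lambda>\<tau>. \<phi> y \<tau> - \<phi> 0 \<tau>) has_real_derivative pdt \<phi> y t - pdt \<phi> 0 t) (at t)"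
      using y by (intro DERIV_diff regular2_derivatives(3)[OF assms(1,2)]) auto
    show "integral {0..y} (\<lambda>z. pdx \<phi> z \<tau>) = \<phi> y \<tau> - \<phi> 0 \<tau>" if "\<tau> \<in> {0<..}" for \<tau>
      using that y
      by (intro integral_unique has_integral_derivative_initial_segment) (auto intro: regular2_derivatives(1)[OF assms(1)])
  qed (use assms in auto)
  have "((\<lambda>y. integral {0..y} (\<lambda>z. pdt (pdx \<phi>) z t)) has_real_derivative pdt (pdx \<phi>) x t) (at x)"
    using assms by (intro has_real_derivative_at_interior[where a=0 and b=pi]
        integral_has_vector_derivative regular2_continuous_slice) auto
  from DERIV_add[OF this DERIV_const[of "pdt \<phi> 0 t"]]
  have "((\<lambda>y. integral {0..y} (\<lambda>z. pdt (pdx \<phi>) z t) + pdt \<phi> 0 t) has_real_derivative pdt (pdx \<phi>) x t) (at x)"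
    by simp
  then show ?thesis
    by (rule has_field_derivative_transform_within_open[where S="{0<..<pi}"]) (use assms antiderivative in auto)
qed

lemma L2inner_antiderivative_by_parts:
  assumes "regular2 \<phi>" "t > 0" "\<forall>\<tau>>0. integral {0..pi} (\<lambda>x. \<phi> x \<tau>) = 0"
    and "continuous_on {0..pi} f" "continuous_on {0..pi} f'"
    and "\<And>x. x \<in> {0<..<pi} \<Longrightarrow> (f has_real_derivative f' x) (at x)"
  shows "L2inner f' (\<lambda>x. integral {0..x} (\<lambda>y. pdt \<phi> y t)) = - L2inner f (\<lambda>x. pdt \<phi> x t)"
proof -
  note \<phi>t_cont = regular2_continuous_slice(3)[OF assms(1,2)]
  have "L2inner f' (\<lambda>x. integral {0..x} (\<lambda>y. pdt \<phi> y t))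
          = f pi * integral {0..pi} (\<lambda>y. pdt \<phi> y t) - f 0 * integral {0..0} (\<lambda>y. pdt \<phi> y t)
            - L2inner f (\<lambda>x. pdt \<phi> x t)"
    unfolding L2inner_def
  proof (rule integral_by_parts_continuous)
    show "continuous_on {0..pi} (\<lambda>x. integral {0..x} (\<lambda>y. pdt \<phi> y t))"
      by (intro indefinite_integral_continuous_1 integrable_continuous_interval \<phi>t_cont)
    fix x :: real assume "x \<in> {0<..<pi}"
    then show "((\<lambda>x. integral {0..x} (\<lambda>y. pdt \<phi> y t)) has_real_derivative pdt \<phi> x t) (at x)"
      by (intro has_real_derivative_at_interior[where a=0 and b=pi]
          integral_has_vector_derivative \<phi>t_cont) auto
  qed (use assms \<phi>t_cont in auto)
  then show ?thesis using integral_pdt_eq_0[OF assms(1-3)] by simp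
qed

lemma L2inner_pdt_pdx_antiderivative:
  assumes "regular2 \<phi>" "t > 0" "\<forall>\<tau>>0. integral {0..pi} (\<lambda>x. \<phi> x \<tau>) = 0"
  shows "L2inner (\<lambda>x. pdt (pdx \<phi>) x t) (\<lambda>x. integral {0..x} (\<lambda>y. pdt \<phi> y t))
           = - (L2norm (\<lambda>x. pdt \<phi> x t))\<^sup>2"
  using L2inner_antiderivative_by_parts[OF assms regular2_continuous_slice(3,5)[OF assms(1,2)]
      pdt_has_real_derivative_pdt_pdx[OF assms(1,2)]]
  by (simp add: L2norm_square)

lemma second_equation_integrated:
  assumes "regular2 u" "regular2 \<phi>" "regular2 \<theta>" "t > 0" "x \<in> {0..pi}"
    and eq: "\<And>y. y \<in> {0<..<pi} \<Longrightarrow>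
      J * pdt (pdt \<phi>) y t = \<alpha> * pdx (pdx \<phi>) y t - b * pdx u y t - \<xi> * \<phi> y t - \<beta> * pdx \<theta> y t"
    and bc: "u 0 t = 0" "pdx \<phi> 0 t = 0" "\<theta> 0 t = 0"
  shows "J * integral {0..x} (\<lambda>y. pdt (pdt \<phi>) y t)
           = \<alpha> * pdx \<phi> x t - b * u x t - \<xi> * integral {0..x} (\<lambda>y. \<phi> y t) - \<beta> * \<theta> x t"
proof -
  note ftc = has_integral_derivative_initial_segment[where a=0 and b=pi, OF _ assms(5)]
  have "((\<lambda>y. \<alpha> * pdx (pdx \<phi>) y t - b * pdx u y t - \<xi> * \<phi> y t - \<beta> * pdx \<theta> y t) has_integral
          \<alpha> * (pdx \<phi> x t - pdx \<phi> 0 t) - b * (u x t - u 0 t) - \<xi> * integral {0..x} (\<lambda>y. \<phi> y t)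
          - \<beta> * (\<theta> x t - \<theta> 0 t)) {0..x}"
    using assms(5) continuous_on_subset[OF regular2_continuous_slice(1)[OF assms(2,4)], of "{0..x}"]
    by (intro has_integral_diff has_integral_mult_right ftc regular2_derivatives(1,2)[OF _ assms(4)] assms(1-3)
        integrable_integral integrable_continuous_interval) auto
  then have "((\<lambda>y. \<alpha> * pdx (pdx \<phi>) y t - b * pdx u y t - \<xi> * \<phi> y t - \<beta> * pdx \<theta> y t) has_integral
          \<alpha> * pdx \<phi> x t - b * u x t - \<xi> * integral {0..x} (\<lambda>y. \<phi> y t) - \<beta> * \<theta> x t) {0..x}"
    using bc by simp
  then have "((\<lambda>y. J * pdt (pdt \<phi>) y t) has_integral
          \<alpha> * pdx \<phi> x t - b * u x t - \<xi> * integral {0..x} (\<lambda>y. \<phi> y t) - \<beta> * \<theta> x t) {0..x}"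
    by (rule has_integral_spike_finite[where S="{0, pi}", rotated 2]) (use assms(5) eq in auto)
  from integral_unique[OF this] show ?thesis by simp
qed

lemma has_real_derivative_L2inner_antiderivative:
  assumes "regular2 \<phi>" "regular2 \<theta>" "t > 0"
  shows "((\<lambda>\<tau>. L2inner (\<lambda>x. \<theta> x \<tau>) (\<lambda>x. integral {0..x} (\<lambda>y. pdt \<phi> y \<tau>))) has_real_derivative
           L2inner (\<lambda>x. pdt \<theta> x t) (\<lambda>x. integral {0..x} (\<lambda>y. pdt \<phi> y t))
           + L2inner (\<lambda>x. \<theta> x t) (\<lambda>x. integral {0..x} (\<lambda>y. pdt (pdt \<phi>) y t))) (at t)"
proof -
  note joint\<phi> = regular2_continuous[OF assms(1)] and joint\<theta> = regular2_continuous[OF assms(2)]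
  have "((\<lambda>\<tau>. integral {0..pi} (\<lambda>x. \<theta> x \<tau> * integral {0..x} (\<lambda>y. pdt \<phi> y \<tau>))) has_real_derivative
          integral {0..pi} (\<lambda>x. pdt \<theta> x t * integral {0..x} (\<lambda>y. pdt \<phi> y t)
                                + \<theta> x t * integral {0..x} (\<lambda>y. pdt (pdt \<phi>) y t))) (at t)"
  proof (rule has_real_derivative_integral_param[where T="{0<..}"])
    have "continuous_on ({0..pi} \<times> {0<..}) (\<lambda>(x, \<tau>). \<theta> x \<tau> * integral {0..x} (\<lambda>y. pdt \<phi> y \<tau>))"
      using continuous_on_mult[OF joint\<theta>(1) continuous_on_indefinite_integral_param[OF joint\<phi>(3)]]
      by (simp add: split_def)
    then show "continuous_on {0..pi} (\<lambda>x. \<theta> x \<tau> * integral {0..x} (\<lambda>y. pdt \<phi> y \<tau>))"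
      if "\<tau> \<in> {0<..}" for \<tau>
      using that by (rule continuous_on_slice)
    show "continuous_on ({0..pi} \<times> {0<..}) (\<lambda>(x, \<tau>). pdt \<theta> x \<tau> * integral {0..x} (\<lambda>y. pdt \<phi> y \<tau>)
                                + \<theta> x \<tau> * integral {0..x} (\<lambda>y. pdt (pdt \<phi>) y \<tau>))"
      using continuous_on_add[OF
          continuous_on_mult[OF joint\<theta>(3) continuous_on_indefinite_integral_param[OF joint\<phi>(3)]]
          continuous_on_mult[OF joint\<theta>(1) continuous_on_indefinite_integral_param[OF joint\<phi>(4)]]]
      by (simp add: split_def)
    fix x \<tau> :: real assume x: "x \<in> {0..pi}" and \<tau>: "\<tau> \<in> {0<..}"
    have "((\<lambda>\<tau>. integral {0..x} (\<lambda>y. pdt \<phi> y \<tau>)) has_real_derivative integral {0..x} (\<lambda>y. pdt (pdt \<phi>) y \<tau>)) (at \<tau>)"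
      using x \<tau> by (intro has_real_derivative_integral_regular2(2)[OF assms(1)]) auto
    then show "((\<lambda>\<tau>. \<theta> x \<tau> * integral {0..x} (\<lambda>y. pdt \<phi> y \<tau>)) has_real_derivative
        pdt \<theta> x \<tau> * integral {0..x} (\<lambda>y. pdt \<phi> y \<tau>) + \<theta> x \<tau> * integral {0..x} (\<lambda>y. pdt (pdt \<phi>) y \<tau>)) (at \<tau>)"
      using regular2_derivatives(3)[OF assms(2) _ x] \<tau> by (auto intro!: derivative_eq_intros)
  qed (use assms in auto)
  moreover have "integral {0..pi} (\<lambda>x. pdt \<theta> x t * integral {0..x} (\<lambda>y. pdt \<phi> y t)
                                + \<theta> x t * integral {0..x} (\<lambda>y. pdt (pdt \<phi>) y t))
      = L2inner (\<lambda>x. pdt \<theta> x t) (\<lambda>x. integral {0..x} (\<lambda>y. pdt \<phi> y t))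
        + L2inner (\<lambda>x. \<theta> x t) (\<lambda>x. integral {0..x} (\<lambda>y. pdt (pdt \<phi>) y t))"
    unfolding L2inner_def using regular2_continuous_slice[OF assms(1,3)] regular2_continuous_slice[OF assms(2,3)]
    by (intro integral_add integrable_continuous_interval continuous_intros
        indefinite_integral_continuous_1 integrable_continuous_interval) auto
  ultimately show ?thesis by (simp add: L2inner_def)
qed

lemma memory_term_by_parts:
  assumes "regular_eta \<kappa> \<kappa>' \<eta>" "regular2 \<phi>" "t > 0"
    and "\<forall>\<tau>>0. integral {0..pi} (\<lambda>x. \<phi> x \<tau>) = 0"
  shows "set_integrable lborel {0<..} (\<lambda>s. \<kappa> s * L2inner (\<lambda>x. e_x \<eta> x s t) (\<lambda>x. pdt \<phi> x t))"
    and "L2inner (\<lambda>x. LINT s:{0<..}|lborel. \<kappa> s * e_xx \<eta> x s t) (\<lambda>x. integral {0..x} (\<lambda>y. pdt \<phi> y t))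
           = - (LINT s:{0<..}|lborel. \<kappa> s * L2inner (\<lambda>x. e_x \<eta> x s t) (\<lambda>x. pdt \<phi> x t))"
proof -
  define P where "P x = integral {0..x} (\<lambda>y. pdt \<phi> y t)" for x
  have P_cont: "continuous_on {0..pi} P"
    unfolding P_def by (intro indefinite_integral_continuous_1 integrable_continuous_interval
        regular2_continuous_slice(3)[OF assms(2,3)])
  have by_parts: "integral {0..pi} (\<lambda>x. \<kappa> s * e_xx \<eta> x s t * P x)
                    = - (\<kappa> s * L2inner (\<lambda>x. e_x \<eta> x s t) (\<lambda>x. pdt \<phi> x t))" if "s \<in> {0<..}" for s
    using L2inner_antiderivative_by_parts[OF assms(2-4) regular_eta_continuous_slice[OF assms(1,3)]
        regular_eta_has_real_derivative_e_x[OF assms(1,3)], of s] that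
    by (simp add: L2inner_def P_def mult.assoc)
  have swap: "set_integrable lborel {0<..} (\<lambda>s. integral {0..pi} (\<lambda>x. \<kappa> s * e_xx \<eta> x s t * P x))"
    "integral {0..pi} (\<lambda>x. (LINT s:{0<..}|lborel. \<kappa> s * e_xx \<eta> x s t) * P x)
       = (LINT s:{0<..}|lborel. integral {0..pi} (\<lambda>x. \<kappa> s * e_xx \<eta> x s t * P x))"
    using assms(1,3) regular_eta_continuous_slice(2)[OF assms(1,3)] unfolding regular_eta_def
    by (intro integral_set_lebesgue_integral_swap P_cont continuous_intros; force)+
  show integrable: "set_integrable lborel {0<..} (\<lambda>s. \<kappa> s * L2inner (\<lambda>x. e_x \<eta> x s t) (\<lambda>x. pdt \<phi> x t))"
  proof -
    have "set_integrable lborel {0<..} (\<lambda>s. - integral {0..pi} (\<lambda>x. \<kappa> s * e_xx \<eta> x s t * P x))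
            = set_integrable lborel {0<..} (\<lambda>s. \<kappa> s * L2inner (\<lambda>x. e_x \<eta> x s t) (\<lambda>x. pdt \<phi> x t))"
      by (rule set_integrable_cong) (simp_all add: by_parts)
    then show ?thesis
      using set_integrable_mult_right[of "-1" lborel "{0<..}", OF swap(1)] by simp
  qed
  show "L2inner (\<lambda>x. LINT s:{0<..}|lborel. \<kappa> s * e_xx \<eta> x s t) (\<lambda>x. integral {0..x} (\<lambda>y. pdt \<phi> y t))
          = - (LINT s:{0<..}|lborel. \<kappa> s * L2inner (\<lambda>x. e_x \<eta> x s t) (\<lambda>x. pdt \<phi> x t))"
  proof -
    have "(LINT s:{0<..}|lborel. integral {0..pi} (\<lambda>x. \<kappa> s * e_xx \<eta> x s t * P x))
            = (LINT s:{0<..}|lborel. - (\<kappa> s * L2inner (\<lambda>x. e_x \<eta> x s t) (\<lambda>x. pdt \<phi> x t)))"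
      by (rule set_lebesgue_integral_cong) (simp_all add: by_parts)
    with set_integral_uminus[OF integrable] show ?thesis
      unfolding L2inner_def P_def[symmetric] swap(2) by simp
  qed
qed

lemma L2inner_pdt_theta_antiderivative:
  assumes "regular_eta \<kappa> \<kappa>' \<eta>" "regular2 \<phi>" "regular2 \<theta>" "t > 0"
    and mean: "\<forall>\<tau>>0. integral {0..pi} (\<lambda>x. \<phi> x \<tau>) = 0"
    and heat: "\<And>x. x \<in> {0<..<pi} \<Longrightarrow>
      c * pdt \<theta> x t = - \<beta> * pdt (pdx \<phi>) x t + (LINT s:{0<..}|lborel. \<kappa> s * e_xx \<eta> x s t)"
  shows "c * L2inner (\<lambda>x. pdt \<theta> x t) (\<lambda>x. integral {0..x} (\<lambda>y. pdt \<phi> y t))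
           = \<beta> * (L2norm (\<lambda>x. pdt \<phi> x t))\<^sup>2
             - (LINT s:{0<..}|lborel. \<kappa> s * L2inner (\<lambda>x. e_x \<eta> x s t) (\<lambda>x. pdt \<phi> x t))"
proof -
  let ?P = "\<lambda>x. integral {0..x} (\<lambda>y. pdt \<phi> y t)"
  have P_cont: "continuous_on {0..pi} ?P"
    by (intro indefinite_integral_continuous_1 integrable_continuous_interval
        regular2_continuous_slice[OF assms(2,4)])
  have memory: "(LINT s:{0<..}|lborel. \<kappa> s * e_xx \<eta> x s t) = c * pdt \<theta> x t + \<beta> * pdt (pdx \<phi>) x t"
    if "x \<in> {0<..<pi}" for x
    using heat[OF that] by simp
  have "- (LINT s:{0<..}|lborel. \<kappa> s * L2inner (\<lambda>x. e_x \<eta> x s t) (\<lambda>x. pdt \<phi> x t))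
          = L2inner (\<lambda>x. LINT s:{0<..}|lborel. \<kappa> s * e_xx \<eta> x s t) ?P"
    using memory_term_by_parts(2)[OF assms(1,2,4) mean] by simp
  also have "\<dots> = integral {0..pi} (\<lambda>x. c * (pdt \<theta> x t * ?P x) + \<beta> * (pdt (pdx \<phi>) x t * ?P x))"
    unfolding L2inner_def by (intro integral_spike[where S="{0, pi}"]) (auto simp: memory algebra_simps)
  also have "\<dots> = c * L2inner (\<lambda>x. pdt \<theta> x t) ?P + \<beta> * L2inner (\<lambda>x. pdt (pdx \<phi>) x t) ?P"
    unfolding L2inner_def using P_cont regular2_continuous_slice[OF assms(2,4)]
      regular2_continuous_slice[OF assms(3,4)]
    by (subst integral_add) (auto intro!: integrable_continuous_interval continuous_intros)
  finally have "- (LINT s:{0<..}|lborel. \<kappa> s * L2inner (\<lambda>x. e_x \<eta> x s t) (\<lambda>x. pdt \<phi> x t))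
      = c * L2inner (\<lambda>x. pdt \<theta> x t) ?P + \<beta> * L2inner (\<lambda>x. pdt (pdx \<phi>) x t) ?P" .
  with L2inner_pdt_pdx_antiderivative[OF assms(2,4) mean] show ?thesis by (simp add: algebra_simps)
qed

lemma L2inner_theta_antiderivative_pdt_pdt:
  assumes "regular2 u" "regular2 \<phi>" "regular2 \<theta>" "t > 0"
    and eq: "\<And>x. x \<in> {0<..<pi} \<Longrightarrow>
      J * pdt (pdt \<phi>) x t = \<alpha> * pdx (pdx \<phi>) x t - b * pdx u x t - \<xi> * \<phi> x t - \<beta> * pdx \<theta> x t"
    and bc: "u 0 t = 0" "pdx \<phi> 0 t = 0" "\<theta> 0 t = 0"
  shows "J * L2inner (\<lambda>x. \<theta> x t) (\<lambda>x. integral {0..x} (\<lambda>y. pdt (pdt \<phi>) y t))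
           = \<alpha> * L2inner (\<lambda>x. \<theta> x t) (\<lambda>x. pdx \<phi> x t) - b * L2inner (\<lambda>x. \<theta> x t) (\<lambda>x. u x t)
             - \<xi> * L2inner (\<lambda>x. \<theta> x t) (\<lambda>x. integral {0..x} (\<lambda>y. \<phi> y t))
             - \<beta> * (L2norm (\<lambda>x. \<theta> x t))\<^sup>2"
proof -
  note slice = regular2_continuous_slice[OF assms(1,4)] regular2_continuous_slice[OF assms(2,4)]
    regular2_continuous_slice[OF assms(3,4)]
  have "J * L2inner (\<lambda>x. \<theta> x t) (\<lambda>x. integral {0..x} (\<lambda>y. pdt (pdt \<phi>) y t))
          = integral {0..pi} (\<lambda>x. \<alpha> * (\<theta> x t * pdx \<phi> x t) - b * (\<theta> x t * u x t)
              - \<xi> * (\<theta> x t * integral {0..x} (\<lambda>y. \<phi> y t)) - \<beta> * (\<theta> x t * \<theta> x t))"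
    unfolding L2inner_def integral_mult_right[where f="\<lambda>x. \<theta> x t * integral {0..x} (\<lambda>y. pdt (pdt \<phi>) y t)", symmetric]
  proof (rule integral_cong)
    fix x assume "x \<in> {0..pi}"
    from arg_cong[OF second_equation_integrated[OF assms(1-4) this eq bc], of "\<lambda>v. \<theta> x t * v"]
    show "J * (\<theta> x t * integral {0..x} (\<lambda>y. pdt (pdt \<phi>) y t))
            = \<alpha> * (\<theta> x t * pdx \<phi> x t) - b * (\<theta> x t * u x t)
              - \<xi> * (\<theta> x t * integral {0..x} (\<lambda>y. \<phi> y t)) - \<beta> * (\<theta> x t * \<theta> x t)"
      by (simp add: algebra_simps)
  qed
  also have "\<dots> = \<alpha> * L2inner (\<lambda>x. \<theta> x t) (\<lambda>x. pdx \<phi> x t) - b * L2inner (\<lambda>x. \<theta> x t) (\<lambda>x. u x t)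
             - \<xi> * L2inner (\<lambda>x. \<theta> x t) (\<lambda>x. integral {0..x} (\<lambda>y. \<phi> y t))
             - \<beta> * L2inner (\<lambda>x. \<theta> x t) (\<lambda>x. \<theta> x t)"
    unfolding L2inner_def using slice
    by (subst integral_diff integral_mult_right,
        auto intro!: integrable_continuous_interval continuous_intros indefinite_integral_continuous_1)+
  finally show ?thesis by (simp add: L2norm_square)
qed

lemma has_real_derivative_F2:
  assumes "regular2 u" "regular2 \<phi>" "regular2 \<theta>" "regular_eta \<kappa> \<kappa>' \<eta>" "t > 0" "\<beta> \<noteq> 0"
    and mean: "\<forall>\<tau>>0. integral {0..pi} (\<lambda>x. \<phi> x \<tau>) = 0"
    and eq: "\<And>x. x \<in> {0<..<pi} \<Longrightarrow>
      J * pdt (pdt \<phi>) x t = \<alpha> * pdx (pdx \<phi>) x t - b * pdx u x t - \<xi> * \<phi> x t - \<beta> * pdx \<theta> x t"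
    and heat: "\<And>x. x \<in> {0<..<pi} \<Longrightarrow>
      c * pdt \<theta> x t = - \<beta> * pdt (pdx \<phi>) x t + (LINT s:{0<..}|lborel. \<kappa> s * e_xx \<eta> x s t)"
    and bc: "u 0 t = 0" "pdx \<phi> 0 t = 0" "\<theta> 0 t = 0"
  shows "((\<lambda>\<tau>. - (c * J / \<beta>) * L2inner (\<lambda>x. \<theta> x \<tau>) (\<lambda>x. integral {0..x} (\<lambda>y. pdt \<phi> y \<tau>)))
           has_real_derivative
             (J / \<beta>) * (LINT s:{0<..}|lborel. \<kappa> s * L2inner (\<lambda>x. e_x \<eta> x s t) (\<lambda>x. pdt \<phi> x t))
             - J * (L2norm (\<lambda>x. pdt \<phi> x t))\<^sup>2
             - (c * \<alpha> / \<beta>) * L2inner (\<lambda>x. \<theta> x t) (\<lambda>x. pdx \<phi> x t)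
             + (c * b / \<beta>) * L2inner (\<lambda>x. \<theta> x t) (\<lambda>x. u x t)
             + (c * \<xi> / \<beta>) * L2inner (\<lambda>x. \<theta> x t) (\<lambda>x. integral {0..x} (\<lambda>y. \<phi> y t))
             + c * (L2norm (\<lambda>x. \<theta> x t))\<^sup>2) (at t)"
    (is "(_ has_real_derivative ?D) _")
proof -
  let ?A = "L2inner (\<lambda>x. pdt \<theta> x t) (\<lambda>x. integral {0..x} (\<lambda>y. pdt \<phi> y t))"
  let ?B = "L2inner (\<lambda>x. \<theta> x t) (\<lambda>x. integral {0..x} (\<lambda>y. pdt (pdt \<phi>) y t))"
  have "- (c * J / \<beta>) * (?A + ?B) = - (J / \<beta>) * (c * ?A) - (c / \<beta>) * (J * ?B)"
    by (simp add: algebra_simps)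
  also have "\<dots> = ?D"
  proof -
    have A: "c * ?A = \<beta> * (L2norm (\<lambda>x. pdt \<phi> x t))\<^sup>2
             - (LINT s:{0<..}|lborel. \<kappa> s * L2inner (\<lambda>x. e_x \<eta> x s t) (\<lambda>x. pdt \<phi> x t))"
      by (rule L2inner_pdt_theta_antiderivative[OF assms(4,2,3,5) mean heat])
    have B: "J * ?B = \<alpha> * L2inner (\<lambda>x. \<theta> x t) (\<lambda>x. pdx \<phi> x t) - b * L2inner (\<lambda>x. \<theta> x t) (\<lambda>x. u x t)
             - \<xi> * L2inner (\<lambda>x. \<theta> x t) (\<lambda>x. integral {0..x} (\<lambda>y. \<phi> y t))
             - \<beta> * (L2norm (\<lambda>x. \<theta> x t))\<^sup>2"
      by (rule L2inner_theta_antiderivative_pdt_pdt[OF assms(1-3,5) eq bc])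
    show ?thesis unfolding A B using assms(6) by (simp add: field_simps)
  qed
  finally show ?thesis
    using DERIV_cmult[OF has_real_derivative_L2inner_antiderivative[OF assms(2,3,5)], of "- (c * J / \<beta>)"]
    by simp
qed

section \<open>Estimates\<close>

lemma set_integral_nonneg:
  fixes f :: "'a \<Rightarrow> real"
  assumes "\<And>x. x \<in> A \<Longrightarrow> 0 \<le> f x"
  shows "0 \<le> (LINT x:A|M. f x)"
  unfolding set_lebesgue_integral_def using assms
  by (intro integral_nonneg_AE AE_I2) (auto split: split_indicator)

lemma set_integral_nonpos:
  fixes f :: "'a \<Rightarrow> real"
  assumes "\<And>x. x \<in> A \<Longrightarrow> f x \<le> 0"
  shows "(LINT x:A|M. f x) \<le> 0"
  using set_integral_nonneg[of A "\<lambda>x. - f x" M] assms unfolding set_lebesgue_integral_def by simp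

lemma set_integral_memory_bound:
  fixes \<kappa> \<kappa>' a q :: "real \<Rightarrow> real"
  assumes \<kappa>_int: "set_integrable M S \<kappa>" and \<kappa>'q_int: "set_integrable M S (\<lambda>s. \<kappa>' s * q s)"
    and \<kappa>a_int: "set_integrable M S (\<lambda>s. \<kappa> s * a s)"
    and "\<delta> > 0" "\<gamma> > 0"
    and \<kappa>_nonneg: "\<And>s. s \<in> S \<Longrightarrow> 0 \<le> \<kappa> s"
    and \<kappa>'_le: "\<And>s. s \<in> S \<Longrightarrow> \<kappa>' s \<le> - \<delta> * \<kappa> s"
    and q_nonneg: "\<And>s. s \<in> S \<Longrightarrow> 0 \<le> q s"
    and a_le: "\<And>s. s \<in> S \<Longrightarrow> \<bar>a s\<bar> \<le> \<gamma> * N + q s / (4 * \<gamma>)"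
  shows "\<bar>LINT s:S|M. \<kappa> s * a s\<bar>
           \<le> \<gamma> * N * (LINT s:S|M. \<kappa> s) - (LINT s:S|M. \<kappa>' s * q s) / (4 * \<gamma> * \<delta>)"
proof -
  define r where "r s = \<gamma> * N * \<kappa> s - (\<kappa>' s * q s) / (4 * \<gamma> * \<delta>)" for s
  have r_int: "set_integrable M S r"
    unfolding r_def using \<kappa>_int \<kappa>'q_int by (intro set_integral_diff(1)) (auto simp: mult.commute)
  have r_integral: "(LINT s:S|M. r s)
      = \<gamma> * N * (LINT s:S|M. \<kappa> s) - (LINT s:S|M. \<kappa>' s * q s) / (4 * \<gamma> * \<delta>)"
    unfolding r_def using \<kappa>_int \<kappa>'q_int by (subst set_integral_diff(2)) (auto simp: mult.commute)
  have pointwise: "\<bar>\<kappa> s * a s\<bar> \<le> r s" if s: "s \<in> S" for s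
  proof -
    have "\<bar>\<kappa> s * a s\<bar> \<le> \<kappa> s * (\<gamma> * N + q s / (4 * \<gamma>))"
      using \<kappa>_nonneg[OF s] a_le[OF s] by (simp add: abs_mult mult_left_mono)
    also have "\<dots> = \<gamma> * N * \<kappa> s + \<kappa> s * q s / (4 * \<gamma>)"
      by (simp add: algebra_simps)
    also have "\<dots> \<le> \<gamma> * N * \<kappa> s + (- \<kappa>' s / \<delta>) * q s / (4 * \<gamma>)"
    proof -
      have "\<kappa> s \<le> - \<kappa>' s / \<delta>" using \<kappa>'_le[OF s] \<open>\<delta> > 0\<close> by (simp add: field_simps)
      then show ?thesis
        using q_nonneg[OF s] \<open>\<gamma> > 0\<close> by (intro add_left_mono divide_right_mono mult_right_mono) auto
    qed
    also have "\<dots> = r s"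
      using \<open>\<delta> > 0\<close> \<open>\<gamma> > 0\<close> by (simp add: r_def field_simps)
    finally show ?thesis .
  qed
  have "(LINT s:S|M. \<kappa> s * a s) \<le> (LINT s:S|M. r s)"
    using pointwise by (intro set_integral_mono[OF \<kappa>a_int r_int]) (auto simp: abs_le_iff)
  moreover have "- (LINT s:S|M. \<kappa> s * a s) \<le> (LINT s:S|M. r s)"
  proof -
    have "set_integrable M S (\<lambda>s. - (\<kappa> s * a s))"
      using set_integrable_mult_right[of "-1" M S "\<lambda>s. \<kappa> s * a s", OF \<kappa>a_int] by simp
    then show ?thesis
      unfolding set_integral_uminus[OF \<kappa>a_int, symmetric] using pointwise
      by (intro set_integral_mono[OF _ r_int]) (auto simp: abs_le_iff)
  qed
  ultimately show ?thesis unfolding r_integral by linarith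
qed

lemma abs_L2inner_le:
  assumes "continuous_on {0..pi} f" "continuous_on {0..pi} g" "\<gamma> > 0"
  shows "\<bar>L2inner f g\<bar> \<le> \<gamma> * (L2norm g)\<^sup>2 + (L2norm f)\<^sup>2 / (4 * \<gamma>)"
  using integral_young[OF assms, of 1] integral_young[OF assms, of "-1"]
  by (simp add: L2norm_square L2inner_def abs_le_iff)

lemma memory_term_estimate:
  fixes \<kappa> \<kappa>' :: "real \<Rightarrow> real"
  assumes \<kappa>_int: "set_integrable lborel {0..} \<kappa>" and \<kappa>_pos: "\<forall>s\<ge>0. \<kappa> s > 0"
    and "\<delta> > 0" and \<kappa>'_le: "\<forall>s>0. \<kappa>' s \<le> - \<delta> * \<kappa> s"
    and \<eta>: "regular_eta \<kappa> \<kappa>' \<eta>" and \<phi>: "regular2 \<phi>" and "t > 0" "J > 0" "\<beta> \<noteq> 0"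
    and K_int: "set_integrable lborel {0<..} (\<lambda>s. \<kappa> s * L2inner (\<lambda>x. e_x \<eta> x s t) (\<lambda>x. pdt \<phi> x t))"
  shows "(J / \<beta>) * (LINT s:{0<..}|lborel. \<kappa> s * L2inner (\<lambda>x. e_x \<eta> x s t) (\<lambda>x. pdt \<phi> x t))
           \<le> (J / 2) * (L2norm (\<lambda>x. pdt \<phi> x t))\<^sup>2
             - J * ((LINT s:{0<..}|lborel. \<kappa> s) + 1) / (2 * \<beta>\<^sup>2 * \<delta>)
               * (LINT s:{0<..}|lborel. \<kappa>' s * (L2norm (\<lambda>x. e_x \<eta> x s t))\<^sup>2)"
proof -
  define K where "K = (LINT s:{0<..}|lborel. \<kappa> s * L2inner (\<lambda>x. e_x \<eta> x s t) (\<lambda>x. pdt \<phi> x t))"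
  define Q where "Q = (LINT s:{0<..}|lborel. \<kappa>' s * (L2norm (\<lambda>x. e_x \<eta> x s t))\<^sup>2)"
  define N where "N = (L2norm (\<lambda>x. pdt \<phi> x t))\<^sup>2"
  define g where "g = (LINT s:{0<..}|lborel. \<kappa> s)"
  define B where "B = \<bar>\<beta>\<bar>"
  text \<open>The weight \<open>\<gamma>\<close> is chosen so that the \<open>\<phi>\<^sub>t\<close>-part of the bound is at most \<open>J N / 2\<close>.\<close>
  define \<gamma> where "\<gamma> = B / (2 * (g + 1))"
  have g_nonneg: "g \<ge> 0"
    unfolding g_def using \<kappa>_pos by (intro set_integral_nonneg) (simp add: less_imp_le)
  have "B > 0" "\<beta>\<^sup>2 = B\<^sup>2" using \<open>\<beta> \<noteq> 0\<close> by (simp_all add: B_def)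
  have "\<gamma> > 0" using \<open>B > 0\<close> g_nonneg by (simp add: \<gamma>_def)
  have K_bound: "\<bar>K\<bar> \<le> \<gamma> * N * g - Q / (4 * \<gamma> * \<delta>)"
    unfolding K_def Q_def g_def
  proof (rule set_integral_memory_bound[OF _ _ K_int \<open>\<delta> > 0\<close> \<open>\<gamma> > 0\<close>])
    show "set_integrable lborel {0<..} \<kappa>" by (rule set_integrable_subset[OF \<kappa>_int]) auto
    show "set_integrable lborel {0<..} (\<lambda>s. \<kappa>' s * (L2norm (\<lambda>x. e_x \<eta> x s t))\<^sup>2)"
      using \<eta> \<open>t > 0\<close> unfolding regular_eta_def by blast
    fix s :: real assume s: "s \<in> {0<..}"
    show "0 \<le> \<kappa> s" "\<kappa>' s \<le> - \<delta> * \<kappa> s" "0 \<le> (L2norm (\<lambda>x. e_x \<eta> x s t))\<^sup>2"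
      using s \<kappa>_pos \<kappa>'_le by (auto intro: less_imp_le)
    show "\<bar>L2inner (\<lambda>x. e_x \<eta> x s t) (\<lambda>x. pdt \<phi> x t)\<bar>
            \<le> \<gamma> * N + (L2norm (\<lambda>x. e_x \<eta> x s t))\<^sup>2 / (4 * \<gamma>)"
      unfolding N_def using s by (intro abs_L2inner_le regular_eta_continuous_slice[OF \<eta> \<open>t > 0\<close>]
          regular2_continuous_slice[OF \<phi> \<open>t > 0\<close>] \<open>\<gamma> > 0\<close>) auto
  qed
  have "(J / \<beta>) * K \<le> \<bar>(J / \<beta>) * K\<bar>" by (rule abs_ge_self)
  also have "\<dots> = (J / B) * \<bar>K\<bar>"
    using \<open>J > 0\<close> by (simp add: B_def abs_mult)
  also have "\<dots> \<le> (J / B) * (\<gamma> * N * g - Q / (4 * \<gamma> * \<delta>))"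
    using K_bound \<open>J > 0\<close> \<open>B > 0\<close> by (intro mult_left_mono) auto
  also have "\<dots> = (J / 2) * N * (g / (g + 1)) - J * (g + 1) / (2 * B\<^sup>2 * \<delta>) * Q"
  proof -
    have "g + 1 > 0" using g_nonneg by simp
    then have "(J / B) * (\<gamma> * N * g) = (J / 2) * N * (g / (g + 1))"
      "(J / B) * (Q / (4 * \<gamma> * \<delta>)) = J * (g + 1) / (2 * B\<^sup>2 * \<delta>) * Q"
      using \<open>B > 0\<close> \<open>\<delta> > 0\<close> by (simp_all add: \<gamma>_def power2_eq_square field_simps)
    then show ?thesis by (simp add: right_diff_distrib)
  qed
  also have "\<dots> \<le> (J / 2) * N - J * (g + 1) / (2 * B\<^sup>2 * \<delta>) * Q"
    using \<open>J > 0\<close> g_nonneg mult_left_mono[of "g / (g + 1)" 1 "(J / 2) * N"] by (simp add: N_def)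
  finally show ?thesis using \<open>\<beta>\<^sup>2 = B\<^sup>2\<close> by (simp add: K_def Q_def N_def g_def)
qed

lemma square_le_shifted:
  fixes \<mu> b y p :: real
  assumes "\<mu> > 0"
  shows "y\<^sup>2 \<le> (2 / \<mu>) * ((sqrt \<mu> * y + b / sqrt \<mu> * p)\<^sup>2 + b\<^sup>2 / \<mu> * p\<^sup>2)"
proof -
  define w where "w = sqrt \<mu> * y + b / sqrt \<mu> * p"
  define c where "c = b / sqrt \<mu> * p"
  have "(w - c)\<^sup>2 \<le> 2 * w\<^sup>2 + 2 * c\<^sup>2"
    using zero_le_power2[of "w + c"] by (simp add: power2_eq_square algebra_simps)
  moreover have "(w - c)\<^sup>2 = \<mu> * y\<^sup>2" "c\<^sup>2 = b\<^sup>2 / \<mu> * p\<^sup>2"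
    using assms by (simp_all add: w_def c_def power_mult_distrib power_divide)
  ultimately have "\<mu> * y\<^sup>2 \<le> \<mu> * ((2 / \<mu>) * (w\<^sup>2 + b\<^sup>2 / \<mu> * p\<^sup>2))"
    using assms by (simp add: algebra_simps)
  then have "y\<^sup>2 \<le> (2 / \<mu>) * (w\<^sup>2 + b\<^sup>2 / \<mu> * p\<^sup>2)"
    using assms by (rule mult_left_le_imp_le)
  then show ?thesis by (simp only: w_def)
qed

lemma L2norm_u_le:
  assumes "regular2 u" "regular2 \<phi>" "t > 0" "u 0 t = 0" "\<mu> > 0"
  shows "(L2norm (\<lambda>x. u x t))\<^sup>2 \<le> 2 * pi\<^sup>2 / \<mu> * ((L2norm (\<lambda>x. sqrt \<mu> * pdx u x t + b / sqrt \<mu> * \<phi> x t))\<^sup>2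
                                          + b\<^sup>2 / \<mu> * (L2norm (\<lambda>x. \<phi> x t))\<^sup>2)"
proof -
  note ux_cont = regular2_continuous_slice(2)[OF assms(1,3)]
  note \<phi>_cont = regular2_continuous_slice(1)[OF assms(2,3)]
  have "(L2norm (\<lambda>x. u x t))\<^sup>2
          = integral {0..pi} (\<lambda>x. integral {0..x} (\<lambda>y. pdx u y t) * integral {0..x} (\<lambda>y. pdx u y t))"
    unfolding L2norm_square L2inner_def
  proof (rule integral_cong)
    fix x :: real assume "x \<in> {0..pi}"
    then have "integral {0..x} (\<lambda>y. pdx u y t) = u x t"
      using assms(4) by (intro integral_unique has_integral_derivative_initial_segment[where b=pi, THEN
            has_integral_eq_rhs]) (auto intro: regular2_derivatives(1)[OF assms(1,3)])
    then show "u x t * u x t = integral {0..x} (\<lambda>y. pdx u y t) * integral {0..x} (\<lambda>y. pdx u y t)"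
      by simp
  qed
  also have "\<dots> \<le> pi\<^sup>2 * integral {0..pi} (\<lambda>x. pdx u x t * pdx u x t)"
    by (rule poincare_indefinite_integral[OF _ ux_cont]) simp
  also have "integral {0..pi} (\<lambda>x. pdx u x t * pdx u x t)
      \<le> integral {0..pi} (\<lambda>x. (2 / \<mu>) * ((sqrt \<mu> * pdx u x t + b / sqrt \<mu> * \<phi> x t)\<^sup>2
                                            + b\<^sup>2 / \<mu> * (\<phi> x t)\<^sup>2))"
    using ux_cont \<phi>_cont square_le_shifted[OF assms(5)]
    by (intro integral_le integrable_continuous_interval continuous_intros) (auto simp: power2_eq_square)
  also have "\<dots> = (2 / \<mu>) * (integral {0..pi} (\<lambda>x. (sqrt \<mu> * pdx u x t + b / sqrt \<mu> * \<phi> x t)\<^sup>2)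
                                + b\<^sup>2 / \<mu> * integral {0..pi} (\<lambda>x. (\<phi> x t)\<^sup>2))"
    using ux_cont \<phi>_cont
    by (intro integral_unique has_integral_mult_right has_integral_add integrable_integral
        integrable_continuous_interval continuous_intros) auto
  also have "\<dots> = (2 / \<mu>) * ((L2norm (\<lambda>x. sqrt \<mu> * pdx u x t + b / sqrt \<mu> * \<phi> x t))\<^sup>2
                                + b\<^sup>2 / \<mu> * (L2norm (\<lambda>x. \<phi> x t))\<^sup>2)"
    unfolding L2norm_square L2inner_def by (simp only: power2_eq_square)
  finally show ?thesis using assms(5) by (simp add: field_simps)
qed

lemma L2inner_theta_u_estimate:
  assumes "regular2 u" "regular2 \<phi>" "regular2 \<theta>" "t > 0" "u 0 t = 0" "\<mu> > 0" "\<epsilon> > 0"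
  shows "k * L2inner (\<lambda>x. \<theta> x t) (\<lambda>x. u x t)
           \<le> \<epsilon> / 2 * (L2norm (\<lambda>x. sqrt \<mu> * pdx u x t + b / sqrt \<mu> * \<phi> x t))\<^sup>2
             + \<epsilon> / 2 * (L2norm (\<lambda>x. \<phi> x t))\<^sup>2
             + k\<^sup>2 * pi\<^sup>2 / \<mu> * (1 + b\<^sup>2 / \<mu>) / \<epsilon> * (L2norm (\<lambda>x. \<theta> x t))\<^sup>2"
proof -
  define W where "W = (L2norm (\<lambda>x. sqrt \<mu> * pdx u x t + b / sqrt \<mu> * \<phi> x t))\<^sup>2"
  define Ph where "Ph = (L2norm (\<lambda>x. \<phi> x t))\<^sup>2"
  define C where "C = 2 * pi\<^sup>2 / \<mu> * (1 + b\<^sup>2 / \<mu>)"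
  define \<gamma> where "\<gamma> = \<epsilon> / (2 * C)"
  have "C > 0" "\<gamma> > 0" using assms(6,7) by (simp_all add: C_def \<gamma>_def add_pos_nonneg)
  have "(L2norm (\<lambda>x. u x t))\<^sup>2 \<le> 2 * pi\<^sup>2 / \<mu> * (W + b\<^sup>2 / \<mu> * Ph)"
    unfolding W_def Ph_def by (rule L2norm_u_le[OF assms(1,2,4,5,6)])
  also have "\<dots> \<le> C * (W + Ph)"
  proof -
    have "C * (W + Ph) - 2 * pi\<^sup>2 / \<mu> * (W + b\<^sup>2 / \<mu> * Ph) = 2 * pi\<^sup>2 / \<mu> * (b\<^sup>2 / \<mu> * W + Ph)"
      using assms(6) by (simp add: C_def field_simps)
    moreover have "0 \<le> 2 * pi\<^sup>2 / \<mu> * (b\<^sup>2 / \<mu> * W + Ph)"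
      using assms(6) by (simp add: W_def Ph_def)
    ultimately show ?thesis by linarith
  qed
  finally have u_le: "\<gamma> * (L2norm (\<lambda>x. u x t))\<^sup>2 \<le> \<epsilon> / 2 * W + \<epsilon> / 2 * Ph"
    using \<open>\<gamma> > 0\<close> \<open>C > 0\<close> mult_left_mono[of _ _ \<gamma>] by (fastforce simp: \<gamma>_def field_simps)
  have "k * L2inner (\<lambda>x. \<theta> x t) (\<lambda>x. u x t)
          \<le> \<gamma> * (L2norm (\<lambda>x. u x t))\<^sup>2 + k\<^sup>2 / (4 * \<gamma>) * (L2norm (\<lambda>x. \<theta> x t))\<^sup>2"
    using integral_young[OF regular2_continuous_slice(1)[OF assms(3,4)]
        regular2_continuous_slice(1)[OF assms(1,4)] \<open>\<gamma> > 0\<close>]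
    by (simp add: L2norm_square L2inner_def)
  also have "k\<^sup>2 / (4 * \<gamma>) = k\<^sup>2 * pi\<^sup>2 / \<mu> * (1 + b\<^sup>2 / \<mu>) / \<epsilon>"
    using \<open>C > 0\<close> assms(6,7) by (simp add: \<gamma>_def C_def field_simps)
  finally show ?thesis using u_le by (simp add: W_def Ph_def)
qed

lemma L2inner_theta_antiderivative_estimate:
  assumes "regular2 \<phi>" "regular2 \<theta>" "t > 0" "\<epsilon> > 0"
  shows "k * L2inner (\<lambda>x. \<theta> x t) (\<lambda>x. integral {0..x} (\<lambda>y. \<phi> y t))
           \<le> \<epsilon> / 2 * (L2norm (\<lambda>x. \<phi> x t))\<^sup>2 + k\<^sup>2 * pi\<^sup>2 / (2 * \<epsilon>) * (L2norm (\<lambda>x. \<theta> x t))\<^sup>2"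
proof -
  define \<gamma> where "\<gamma> = \<epsilon> / (2 * pi\<^sup>2)"
  have "\<gamma> > 0" using assms(4) by (simp add: \<gamma>_def)
  note \<phi>_cont = regular2_continuous_slice(1)[OF assms(1,3)]
  have "k * L2inner (\<lambda>x. \<theta> x t) (\<lambda>x. integral {0..x} (\<lambda>y. \<phi> y t))
          \<le> \<gamma> * integral {0..pi} (\<lambda>x. integral {0..x} (\<lambda>y. \<phi> y t) * integral {0..x} (\<lambda>y. \<phi> y t))
            + k\<^sup>2 / (4 * \<gamma>) * (L2norm (\<lambda>x. \<theta> x t))\<^sup>2"
    using integral_young[OF regular2_continuous_slice(1)[OF assms(2,3)] _ \<open>\<gamma> > 0\<close>] \<phi>_cont
    by (simp add: L2norm_square L2inner_def indefinite_integral_continuous_1 integrable_continuous_interval)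
  also have "\<gamma> * integral {0..pi} (\<lambda>x. integral {0..x} (\<lambda>y. \<phi> y t) * integral {0..x} (\<lambda>y. \<phi> y t))
               \<le> \<gamma> * (pi\<^sup>2 * (L2norm (\<lambda>x. \<phi> x t))\<^sup>2)"
    using poincare_indefinite_integral[OF _ \<phi>_cont] \<open>\<gamma> > 0\<close>
    by (intro mult_left_mono) (auto simp: L2norm_square L2inner_def)
  finally show ?thesis
    using assms(4) by (simp add: \<gamma>_def field_simps)
qed

section \<open>The derivative of \<open>F\<^sub>2\<close>\<close>

text \<open>The constant \<open>M\<close>: \<open>c\<close> from \<open>F\<^sub>2'\<close> itself, the memory constant of
  \<open>memory_term_estimate\<close>, and the Young constants of the three coupling terms with \<open>\<theta>\<close>.\<close>

definition F2_constant :: "real \<Rightarrow> real \<Rightarrow> real \<Rightarrow> real \<Rightarrow> real \<Rightarrow> real \<Rightarrow> real \<Rightarrow> real \<Rightarrow> real \<Rightarrow> real"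
  where "F2_constant J c \<mu> b \<alpha> \<xi> \<beta> \<delta> g =
    c + J * (g + 1) / (2 * \<beta>\<^sup>2 * \<delta>) + (c * \<alpha> / \<beta>)\<^sup>2 / 4
      + (c * b / \<beta>)\<^sup>2 * pi\<^sup>2 / \<mu> * (1 + b\<^sup>2 / \<mu>) + (c * \<xi> / \<beta>)\<^sup>2 * pi\<^sup>2 / 2"

lemma F2_constant_pos:
  assumes "c > 0" "J > 0" "\<mu> > 0" "\<delta> > 0" "g \<ge> 0"
  shows "F2_constant J c \<mu> b \<alpha> \<xi> \<beta> \<delta> g > 0"
  using assms unfolding F2_constant_def by (simp add: add_pos_nonneg)

lemma F2_constant_absorbs:
  assumes "c > 0" "J > 0" "\<mu> > 0" "\<delta> > 0" "\<epsilon> > 0" "g \<ge> 0" "Q \<le> 0" "T \<ge> 0"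
  shows "F2_constant J c \<mu> b \<alpha> \<xi> \<beta> \<delta> g * Q \<le> J * (g + 1) / (2 * \<beta>\<^sup>2 * \<delta>) * Q"
    and "c * T + (c * \<alpha> / \<beta>)\<^sup>2 / (4 * \<epsilon>) * T + (c * b / \<beta>)\<^sup>2 * pi\<^sup>2 / \<mu> * (1 + b\<^sup>2 / \<mu>) / \<epsilon> * T
           + (c * \<xi> / \<beta>)\<^sup>2 * pi\<^sup>2 / (2 * \<epsilon>) * T
         \<le> F2_constant J c \<mu> b \<alpha> \<xi> \<beta> \<delta> g * (1 + 1 / \<epsilon>) * T"
proof -
  define M\<^sub>\<kappa> where "M\<^sub>\<kappa> = J * (g + 1) / (2 * \<beta>\<^sup>2 * \<delta>)"
  define C where "C = (c * \<alpha> / \<beta>)\<^sup>2 / 4 + (c * b / \<beta>)\<^sup>2 * pi\<^sup>2 / \<mu> * (1 + b\<^sup>2 / \<mu>) + (c * \<xi> / \<beta>)\<^sup>2 * pi\<^sup>2 / 2"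
  have M: "F2_constant J c \<mu> b \<alpha> \<xi> \<beta> \<delta> g = c + M\<^sub>\<kappa> + C"
    unfolding F2_constant_def M\<^sub>\<kappa>_def C_def by simp
  have "M\<^sub>\<kappa> \<ge> 0" "C \<ge> 0"
    using assms by (simp_all add: M\<^sub>\<kappa>_def C_def add_nonneg_nonneg)
  then show "F2_constant J c \<mu> b \<alpha> \<xi> \<beta> \<delta> g * Q \<le> J * (g + 1) / (2 * \<beta>\<^sup>2 * \<delta>) * Q"
    unfolding M M\<^sub>\<kappa>_def[symmetric] using \<open>c > 0\<close> \<open>Q \<le> 0\<close> by (intro mult_right_mono_neg) auto
  have "c + C / \<epsilon> \<le> (c + M\<^sub>\<kappa> + C) * (1 + 1 / \<epsilon>)"
    using \<open>M\<^sub>\<kappa> \<ge> 0\<close> \<open>C \<ge> 0\<close> \<open>c > 0\<close> \<open>\<epsilon> > 0\<close> divide_right_mono[of C "c + M\<^sub>\<kappa> + C" \<epsilon>]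
    by (simp add: distrib_left)
  then have "(c + C / \<epsilon>) * T \<le> (c + M\<^sub>\<kappa> + C) * (1 + 1 / \<epsilon>) * T"
    using \<open>T \<ge> 0\<close> by (rule mult_right_mono)
  then show "c * T + (c * \<alpha> / \<beta>)\<^sup>2 / (4 * \<epsilon>) * T + (c * b / \<beta>)\<^sup>2 * pi\<^sup>2 / \<mu> * (1 + b\<^sup>2 / \<mu>) / \<epsilon> * T
               + (c * \<xi> / \<beta>)\<^sup>2 * pi\<^sup>2 / (2 * \<epsilon>) * T
             \<le> F2_constant J c \<mu> b \<alpha> \<xi> \<beta> \<delta> g * (1 + 1 / \<epsilon>) * T"
    unfolding M by (simp add: C_def algebra_simps add_divide_distrib)
qed

lemma F2_derivative_estimate:
  fixes \<kappa> \<kappa>' :: "real \<Rightarrow> real"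
  assumes "J > 0" "c > 0" "\<mu> > 0" "\<beta> \<noteq> 0" "\<delta> > 0" "\<epsilon> > 0" "t > 0"
    and \<kappa>: "set_integrable lborel {0..} \<kappa>" "\<forall>s\<ge>0. \<kappa> s > 0" "\<forall>s>0. \<kappa>' s \<le> - \<delta> * \<kappa> s"
    and reg: "regular2 u" "regular2 \<phi>" "regular2 \<theta>" "regular_eta \<kappa> \<kappa>' \<eta>"
    and mean: "\<forall>\<tau>>0. integral {0..pi} (\<lambda>x. \<phi> x \<tau>) = 0"
    and eq: "\<And>x. x \<in> {0<..<pi} \<Longrightarrow>
      J * pdt (pdt \<phi>) x t = \<alpha> * pdx (pdx \<phi>) x t - b * pdx u x t - \<xi> * \<phi> x t - \<beta> * pdx \<theta> x t"
    and heat: "\<And>x. x \<in> {0<..<pi} \<Longrightarrow>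
      c * pdt \<theta> x t = - \<beta> * pdt (pdx \<phi>) x t + (LINT s:{0<..}|lborel. \<kappa> s * e_xx \<eta> x s t)"
    and bc: "u 0 t = 0" "pdx \<phi> 0 t = 0" "\<theta> 0 t = 0"
  defines "M \<equiv> F2_constant J c \<mu> b \<alpha> \<xi> \<beta> \<delta> (LINT s:{0<..}|lborel. \<kappa> s)"
  shows "\<exists>D. ((\<lambda>\<tau>. - (c * J / \<beta>) * L2inner (\<lambda>x. \<theta> x \<tau>) (\<lambda>x. integral {0..x} (\<lambda>y. pdt \<phi> y \<tau>)))
              has_real_derivative D) (at t) \<and>
           D \<le> - (J / 2) * (L2norm (\<lambda>x. pdt \<phi> x t))\<^sup>2
                - M * (LINT s:{0<..}|lborel. \<kappa>' s * (L2norm (\<lambda>x. e_x \<eta> x s t))\<^sup>2)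
                + M * (1 + 1 / \<epsilon>) * (L2norm (\<lambda>x. \<theta> x t))\<^sup>2
                + \<epsilon> * (L2norm (\<lambda>x. sqrt \<mu> * pdx u x t + b / sqrt \<mu> * \<phi> x t))\<^sup>2
                + \<epsilon> * (L2norm (\<lambda>x. \<phi> x t))\<^sup>2
                + \<epsilon> * (L2norm (\<lambda>x. pdx \<phi> x t))\<^sup>2"
proof -
  let ?N = "(L2norm (\<lambda>x. pdt \<phi> x t))\<^sup>2"
  let ?Q = "LINT s:{0<..}|lborel. \<kappa>' s * (L2norm (\<lambda>x. e_x \<eta> x s t))\<^sup>2"
  let ?T = "(L2norm (\<lambda>x. \<theta> x t))\<^sup>2"
  let ?W = "(L2norm (\<lambda>x. sqrt \<mu> * pdx u x t + b / sqrt \<mu> * \<phi> x t))\<^sup>2"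
  let ?P = "(L2norm (\<lambda>x. \<phi> x t))\<^sup>2"
  let ?I\<^sub>1 = "L2inner (\<lambda>x. \<theta> x t) (\<lambda>x. pdx \<phi> x t)"
  have memory: "(J / \<beta>) * (LINT s:{0<..}|lborel. \<kappa> s * L2inner (\<lambda>x. e_x \<eta> x s t) (\<lambda>x. pdt \<phi> x t))
      \<le> (J / 2) * ?N - J * ((LINT s:{0<..}|lborel. \<kappa> s) + 1) / (2 * \<beta>\<^sup>2 * \<delta>) * ?Q"
    using memory_term_by_parts(1)[OF reg(4,2) \<open>t > 0\<close> mean]
    by (rule memory_term_estimate[OF \<kappa>(1,2) \<open>\<delta> > 0\<close> \<kappa>(3) reg(4,2) \<open>t > 0\<close> \<open>J > 0\<close> \<open>\<beta> \<noteq> 0\<close>])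
  have Q_nonpos: "?Q \<le> 0"
  proof (rule set_integral_nonpos)
    fix s :: real assume "s \<in> {0<..}"
    then have "\<kappa>' s \<le> - \<delta> * \<kappa> s" "0 < \<delta> * \<kappa> s" using \<kappa>(2,3) \<open>\<delta> > 0\<close> by auto
    then show "\<kappa>' s * (L2norm (\<lambda>x. e_x \<eta> x s t))\<^sup>2 \<le> 0" by (simp add: mult_nonpos_nonneg)
  qed
  have "0 \<le> (LINT s:{0<..}|lborel. \<kappa> s)"
    using \<kappa>(2) by (intro set_integral_nonneg) (simp add: less_imp_le)
  note absorb = F2_constant_absorbs[where b=b and \<alpha>=\<alpha> and \<xi>=\<xi> and \<beta>=\<beta> and T="?T",
      OF \<open>c > 0\<close> \<open>J > 0\<close> \<open>\<mu> > 0\<close> \<open>\<delta> > 0\<close> \<open>\<epsilon> > 0\<close> this Q_nonpos zero_le_power2, folded M_def]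
  have I\<^sub>1_le: "(- (c * \<alpha> / \<beta>)) * ?I\<^sub>1 \<le> \<epsilon> * (L2norm (\<lambda>x. pdx \<phi> x t))\<^sup>2 + (c * \<alpha> / \<beta>)\<^sup>2 / (4 * \<epsilon>) * ?T"
    using integral_young[OF regular2_continuous_slice(1)[OF reg(3) \<open>t > 0\<close>]
        regular2_continuous_slice(2)[OF reg(2) \<open>t > 0\<close>] \<open>\<epsilon> > 0\<close>, of "- (c * \<alpha> / \<beta>)"]
    by (simp add: L2norm_square L2inner_def)
  have "\<epsilon> / 2 * ?W \<le> \<epsilon> * ?W" using \<open>\<epsilon> > 0\<close> by simp
  moreover have "(- (c * \<alpha> / \<beta>)) * ?I\<^sub>1 = - ((c * \<alpha> / \<beta>) * ?I\<^sub>1)" "(- M) * ?Q = - (M * ?Q)"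
    "(- (J / 2)) * ?N = - ((J / 2) * ?N)" "J * ?N = 2 * ((J / 2) * ?N)" "\<epsilon> / 2 * ?P + \<epsilon> / 2 * ?P = \<epsilon> * ?P"
    by simp_all
  ultimately show ?thesis
    using has_real_derivative_F2[OF reg assms(7,4) mean eq heat bc] memory absorb I\<^sub>1_le
      L2inner_theta_u_estimate[where k="c * b / \<beta>" and b=b, OF reg(1-3) \<open>t > 0\<close> bc(1) \<open>\<mu> > 0\<close> \<open>\<epsilon> > 0\<close>]
      L2inner_theta_antiderivative_estimate[OF reg(2,3) \<open>t > 0\<close> \<open>\<epsilon> > 0\<close>, of "c * \<xi> / \<beta>"]
    by (intro exI conjI) (assumption, linarith)
qed

text \<open>Only the second and third equations, the boundary values at \<open>x = 0\<close> and the zero mean of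
  \<open>\<phi>\<close> enter the proof.\<close>

theorem lemma6:
  fixes \<rho> J c \<mu> b \<alpha> \<xi> \<beta> \<delta> :: real
    and \<kappa> \<kappa>' :: "real \<Rightarrow> real"
  assumes "\<rho> > 0" "J > 0" "c > 0" "\<mu> > 0" "b > 0" "\<alpha> > 0" "\<xi> > 0"
    and "\<mu> * \<xi> > b\<^sup>2" and "\<beta> \<noteq> 0"
    and h1: "continuous_on {0..} \<kappa>" "set_integrable lborel {0..} \<kappa>"
    and h2: "\<forall>s\<ge>0. \<kappa> s > 0" "\<forall>s>0. (\<kappa> has_real_derivative \<kappa>' s) (at s)"
            "\<forall>s>0. \<kappa>' s \<le> 0"
    and h4: "\<delta> > 0" "\<forall>s>0. \<kappa>' s \<le> - \<delta> * \<kappa> s"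
  shows "\<exists>M>0. \<forall>(u::real\<Rightarrow>real\<Rightarrow>real) (\<phi>::real\<Rightarrow>real\<Rightarrow>real) (\<theta>::real\<Rightarrow>real\<Rightarrow>real)
            (\<eta>::real\<Rightarrow>real\<Rightarrow>real\<Rightarrow>real).
     (regular2 u \<and> regular2 \<phi> \<and> regular2 \<theta> \<and> regular_eta \<kappa> \<kappa>' \<eta> \<and>
      (\<forall>x\<in>{0<..<pi}. \<forall>t>0.
         \<rho> * pdt (pdt u) x t = \<mu> * pdx (pdx u) x t + b * pdx \<phi> x t \<and>
         J * pdt (pdt \<phi>) x t = \<alpha> * pdx (pdx \<phi>) x t - b * pdx u x t - \<xi> * \<phi> x t
                                 - \<beta> * pdx \<theta> x t \<and>
         c * pdt \<theta> x t = - \<beta> * pdt (pdx \<phi>) x t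
                          + set_lebesgue_integral lborel {0<..} (\<lambda>s. \<kappa> s * e_xx \<eta> x s t) \<and>
         (\<forall>s>0. e_t \<eta> x s t = \<theta> x t - e_s \<eta> x s t)) \<and>
      (\<forall>t>0. u 0 t = 0 \<and> u pi t = 0 \<and> pdx \<phi> 0 t = 0 \<and> pdx \<phi> pi t = 0 \<and>
             \<theta> 0 t = 0 \<and> \<theta> pi t = 0 \<and>
             (\<forall>s\<ge>0. \<eta> 0 s t = 0 \<and> \<eta> pi s t = 0) \<and>
             (\<forall>x\<in>{0..pi}. \<eta> x 0 t = 0)) \<and>
      (\<forall>t>0. integral {0..pi} (\<lambda>x. \<phi> x t) = 0))
     \<longrightarrow>
     (\<forall>\<epsilon>>0. \<forall>t>0. \<exists>D.
        ((\<lambda>\<tau>. - (c * J / \<beta>) * L2inner (\<lambda>x. \<theta> x \<tau>) (\<lambda>x. integral {0..x} (\<lambda>y. pdt \<phi> y \<tau>)))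
           has_real_derivative D) (at t) \<and>
        D \<le> - (J / 2) * (L2norm (\<lambda>x. pdt \<phi> x t))\<^sup>2
             - M * set_lebesgue_integral lborel {0<..} (\<lambda>s. \<kappa>' s * (L2norm (\<lambda>x. e_x \<eta> x s t))\<^sup>2)
             + M * (1 + 1 / \<epsilon>) * (L2norm (\<lambda>x. \<theta> x t))\<^sup>2
             + \<epsilon> * (L2norm (\<lambda>x. sqrt \<mu> * pdx u x t + b / sqrt \<mu> * \<phi> x t))\<^sup>2
             + \<epsilon> * (L2norm (\<lambda>x. \<phi> x t))\<^sup>2
             + \<epsilon> * (L2norm (\<lambda>x. pdx \<phi> x t))\<^sup>2)"
proof -
  let ?M = "F2_constant J c \<mu> b \<alpha> \<xi> \<beta> \<delta> (LINT s:{0<..}|lborel. \<kappa> s)"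
  have "0 \<le> (LINT s:{0<..}|lborel. \<kappa> s)" using h2(1) by (intro set_integral_nonneg) (simp add: less_imp_le)
  then have M_pos: "?M > 0" using assms(2-4) h4(1) by (intro F2_constant_pos)
  show ?thesis
  proof (rule exI[of _ ?M], intro conjI allI impI)
    show "?M > 0" by (rule M_pos)
  qed (rule F2_derivative_estimate; use assms(2-4,9) h1(2) h2(1) h4 in auto)
qed

end
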